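(* On a framework, $g^{is}g^{jt}R_{st}(\cdot)\bigl(F_{ij}\bigr)=0$, where the curvature operator acts on the covariant 2-tensor $F_{ij}$ by $R_{st}(\cdot)(F_{ij})=-R^a_{sti}F_{aj}-R^a_{stj}F_{ia}$.
   Context: Framework. Let $M$ be a connected real manifold. Lowercase Latin indices denote tangent-vector components in local coordinates; Greek indices denote components with respect to a basis of a real 4-dimensional vector space $V$ ("spinors"); summation convention. $M$ carries smooth fields $T^k_{ij}$ and $T^\alpha_{i\beta}$ with $T^\alpha_{i\lambda}T^\lambda_{j\beta}-T^\alpha_{j\lambda}T^\lambda_{i\beta}=T^k_{ij}T^\alpha_{k\beta}$, such that at every point the tangent space with bracket $[u,v]^k=T^k_{ij}u^iv^j$ is a Lie algebra isomorphic to $\mathfrak{so}(2,3)\cong\mathfrak{sp}(4,\mathbb R)$ and $u\mapsto u^iT^\alpha_{i\beta}$ is its 4-dimensional irreducible real representation on $V$. The local action $T_k(\cdot)$ acts on tensors by the Leibniz rule. There is a covariant derivative $\nabla_k=\partial_k+\Gamma_k(\cdot)$ on all tensors with vector and spinor indices (Leibniz rule, commuting with contractions) such that $[\nabla_i,\nabla_j]=T^k_{ij}\nabla_k+R_{ij}(\cdot)$ for a linear Leibniz operator $R_{ij}(\cdot)$ (curvature) trivial on functions, and $\nabla_kT^\alpha_{i\beta}=0$. Write $R_{ij}(\cdot)v^l=R^l_{ijk}v^k$ on vectors and $R_{ij}(\cdot)\psi^\beta=R^\beta_{ij\alpha}\psi^\alpha$ on spinors. Metric $g_{ij}=T^\alpha_{i\beta}T^\beta_{j\alpha}$,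 inverse $g^{ij}$. The field tensor is $F_{ij}=\tfrac14R^\alpha_{ij\alpha}$. *)

theory Defs
  imports "HOL-Analysis.Analysis"
begin

text \<open>Local model of the framework: a connected open coordinate domain U in R^10
  (the tangent space must be 10-dimensional, being isomorphic to so(2,3)).
  Vector (Latin) indices range over the numeral type 10, spinor (Greek) indices
  over the numeral type 4.  All sums over indices are sums over UNIV.\<close>

type_synonym pt = "real^10"

definition pd :: "10 \<Rightarrow> (pt \<Rightarrow> real) \<Rightarrow> pt \<Rightarrow> real" where
  "pd k f x = deriv (\<lambda>t. f (x + t *\<^sub>R axis k 1)) 0"

fun iter_pd :: "10 list \<Rightarrow> (pt \<Rightarrow> real) \<Rightarrow> pt \<Rightarrow> real" where
  "iter_pd [] f = f"
| "iter_pd (k # ks) f = pd k (iter_pd ks f)"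

definition smooth_on :: "pt set \<Rightarrow> (pt \<Rightarrow> real) \<Rightarrow> bool" where
  "smooth_on U f \<longleftrightarrow> (\<forall>ks. iter_pd ks f differentiable_on U)"

definition Jsp :: "4 \<Rightarrow> 4 \<Rightarrow> real" where
  "Jsp a b = (if a = 0 \<and> b = 2 then 1 else if a = 1 \<and> b = 3 then 1
              else if a = 2 \<and> b = 0 then -1 else if a = 3 \<and> b = 1 then -1 else 0)"

definition sp4 :: "(4 \<Rightarrow> 4 \<Rightarrow> real) set" where
  "sp4 = {A. \<forall>a b. (\<Sum>c\<in>UNIV. A c a * Jsp c b) + (\<Sum>c\<in>UNIV. Jsp a c * A c b) = 0}"

definition mat_comm :: "(4 \<Rightarrow> 4 \<Rightarrow> real) \<Rightarrow> (4 \<Rightarrow> 4 \<Rightarrow> real) \<Rightarrow> 4 \<Rightarrow> 4 \<Rightarrow> real" where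
  "mat_comm A B = (\<lambda>a b. (\<Sum>c\<in>UNIV. A a c * B c b) - (\<Sum>c\<in>UNIV. B a c * A c b))"

text \<open>Tv x k i j = T^k_{ij}(x);  Ts x i \<alpha> \<beta> = T^\<alpha>_{i\<beta>}(x).\<close>
definition bracket :: "(pt \<Rightarrow> 10 \<Rightarrow> 10 \<Rightarrow> 10 \<Rightarrow> real) \<Rightarrow> pt \<Rightarrow> (10 \<Rightarrow> real) \<Rightarrow> (10 \<Rightarrow> real) \<Rightarrow> 10 \<Rightarrow> real" where
  "bracket Tv x u v = (\<lambda>k. \<Sum>i\<in>UNIV. \<Sum>j\<in>UNIV. Tv x k i j * u i * v j)"

definition rep :: "(pt \<Rightarrow> 10 \<Rightarrow> 4 \<Rightarrow> 4 \<Rightarrow> real) \<Rightarrow> pt \<Rightarrow> (10 \<Rightarrow> real) \<Rightarrow> 4 \<Rightarrow> 4 \<Rightarrow> real" where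
  "rep Ts x u = (\<lambda>a b. \<Sum>i\<in>UNIV. u i * Ts x i a b)"

definition lie_iso_sp4 :: "(pt \<Rightarrow> 10 \<Rightarrow> 10 \<Rightarrow> 10 \<Rightarrow> real) \<Rightarrow> pt \<Rightarrow> bool" where
  "lie_iso_sp4 Tv x \<longleftrightarrow> (\<exists>\<phi> :: (10 \<Rightarrow> real) \<Rightarrow> (4 \<Rightarrow> 4 \<Rightarrow> real).
      (\<forall>a b u v. \<phi> (\<lambda>k. a * u k + b * v k) = (\<lambda>p q. a * \<phi> u p q + b * \<phi> v p q))
    \<and> inj \<phi> \<and> range \<phi> = sp4
    \<and> (\<forall>u v. \<phi> (bracket Tv x u v) = mat_comm (\<phi> u) (\<phi> v)))"

definition irreducible_rep :: "(pt \<Rightarrow> 10 \<Rightarrow> 4 \<Rightarrow> 4 \<Rightarrow> real) \<Rightarrow> pt \<Rightarrow> bool" where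
  "irreducible_rep Ts x \<longleftrightarrow> (\<forall>W :: (real^4) set.
      subspace W \<and> (\<forall>u. \<forall>\<psi>\<in>W. (\<chi> a. \<Sum>b\<in>UNIV. rep Ts x u a b * \<psi> $ b) \<in> W)
      \<longrightarrow> W = {0} \<or> W = UNIV)"

text \<open>Connection coefficients: Gv x l k j = \<Gamma>^l_{kj}, i.e. \<nabla>_k v^l = \<partial>_k v^l + \<Gamma>^l_{kj} v^j;
  Gs x \<alpha> k \<beta> = \<Gamma>^\<alpha>_{k\<beta>}, i.e. \<nabla>_k \<psi>^\<alpha> = \<partial>_k \<psi>^\<alpha> + \<Gamma>^\<alpha>_{k\<beta>} \<psi>^\<beta>.
  Extended to all tensors by the Leibniz rule, commuting with contractions.\<close>

definition nabla_nabla_fun :: "(pt \<Rightarrow> 10 \<Rightarrow> 10 \<Rightarrow> 10 \<Rightarrow> real) \<Rightarrow> (pt \<Rightarrow> real) \<Rightarrow> 10 \<Rightarrow> 10 \<Rightarrow> pt \<Rightarrow> real" where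
  "nabla_nabla_fun Gv f i j x = pd i (pd j f) x - (\<Sum>m\<in>UNIV. Gv x m i j * pd m f x)"

definition nabla_vec :: "(pt \<Rightarrow> 10 \<Rightarrow> 10 \<Rightarrow> 10 \<Rightarrow> real) \<Rightarrow> (pt \<Rightarrow> 10 \<Rightarrow> real) \<Rightarrow> 10 \<Rightarrow> 10 \<Rightarrow> pt \<Rightarrow> real" where
  "nabla_vec Gv v k l x = pd k (\<lambda>y. v y l) x + (\<Sum>j\<in>UNIV. Gv x l k j * v x j)"

definition nabla_nabla_vec :: "(pt \<Rightarrow> 10 \<Rightarrow> 10 \<Rightarrow> 10 \<Rightarrow> real) \<Rightarrow> (pt \<Rightarrow> 10 \<Rightarrow> real) \<Rightarrow> 10 \<Rightarrow> 10 \<Rightarrow> 10 \<Rightarrow> pt \<Rightarrow> real" where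
  "nabla_nabla_vec Gv v i j l x = pd i (nabla_vec Gv v j l) x
     - (\<Sum>m\<in>UNIV. Gv x m i j * nabla_vec Gv v m l x) + (\<Sum>m\<in>UNIV. Gv x l i m * nabla_vec Gv v j m x)"

definition nabla_spin :: "(pt \<Rightarrow> 4 \<Rightarrow> 10 \<Rightarrow> 4 \<Rightarrow> real) \<Rightarrow> (pt \<Rightarrow> 4 \<Rightarrow> real) \<Rightarrow> 10 \<Rightarrow> 4 \<Rightarrow> pt \<Rightarrow> real" where
  "nabla_spin Gs \<psi> k a x = pd k (\<lambda>y. \<psi> y a) x + (\<Sum>b\<in>UNIV. Gs x a k b * \<psi> x b)"

definition nabla_nabla_spin :: "(pt \<Rightarrow> 10 \<Rightarrow> 10 \<Rightarrow> 10 \<Rightarrow> real) \<Rightarrow> (pt \<Rightarrow> 4 \<Rightarrow> 10 \<Rightarrow> 4 \<Rightarrow> real)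
    \<Rightarrow> (pt \<Rightarrow> 4 \<Rightarrow> real) \<Rightarrow> 10 \<Rightarrow> 10 \<Rightarrow> 4 \<Rightarrow> pt \<Rightarrow> real" where
  "nabla_nabla_spin Gv Gs \<psi> i j a x = pd i (nabla_spin Gs \<psi> j a) x
     - (\<Sum>m\<in>UNIV. Gv x m i j * nabla_spin Gs \<psi> m a x) + (\<Sum>b\<in>UNIV. Gs x a i b * nabla_spin Gs \<psi> j b x)"

definition nabla_Ts :: "(pt \<Rightarrow> 10 \<Rightarrow> 10 \<Rightarrow> 10 \<Rightarrow> real) \<Rightarrow> (pt \<Rightarrow> 4 \<Rightarrow> 10 \<Rightarrow> 4 \<Rightarrow> real)
    \<Rightarrow> (pt \<Rightarrow> 10 \<Rightarrow> 4 \<Rightarrow> 4 \<Rightarrow> real) \<Rightarrow> 10 \<Rightarrow> 10 \<Rightarrow> 4 \<Rightarrow> 4 \<Rightarrow> pt \<Rightarrow> real" where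
  "nabla_Ts Gv Gs Ts k i a b x = pd k (\<lambda>y. Ts y i a b) x
     - (\<Sum>m\<in>UNIV. Gv x m k i * Ts x m a b)
     + (\<Sum>c\<in>UNIV. Gs x a k c * Ts x i c b) - (\<Sum>c\<in>UNIV. Gs x c k b * Ts x i a c)"

text \<open>A framework on the (connected, open) coordinate domain U, with connection
  coefficients Gv, Gs and curvature components Rv x l i j k = R^l_{ijk},
  Rs x \<alpha> i j \<beta> = R^\<alpha>_{ij\<beta>}.\<close>
definition framework ::
  "pt set \<Rightarrow> (pt \<Rightarrow> 10 \<Rightarrow> 10 \<Rightarrow> 10 \<Rightarrow> real) \<Rightarrow> (pt \<Rightarrow> 10 \<Rightarrow> 4 \<Rightarrow> 4 \<Rightarrow> real)
   \<Rightarrow> (pt \<Rightarrow> 10 \<Rightarrow> 10 \<Rightarrow> 10 \<Rightarrow> real) \<Rightarrow> (pt \<Rightarrow> 4 \<Rightarrow> 10 \<Rightarrow> 4 \<Rightarrow> real)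
   \<Rightarrow> (pt \<Rightarrow> 10 \<Rightarrow> 10 \<Rightarrow> 10 \<Rightarrow> 10 \<Rightarrow> real) \<Rightarrow> (pt \<Rightarrow> 4 \<Rightarrow> 10 \<Rightarrow> 10 \<Rightarrow> 4 \<Rightarrow> real) \<Rightarrow> bool" where
  "framework U Tv Ts Gv Gs Rv Rs \<longleftrightarrow>
     open U \<and> connected U \<and> U \<noteq> {}
   \<and> (\<forall>k i j. smooth_on U (\<lambda>x. Tv x k i j))
   \<and> (\<forall>i a b. smooth_on U (\<lambda>x. Ts x i a b))
   \<and> (\<forall>l k j. smooth_on U (\<lambda>x. Gv x l k j))
   \<and> (\<forall>a k b. smooth_on U (\<lambda>x. Gs x a k b))
   \<and> (\<forall>x\<in>U. \<forall>i j a b.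
        (\<Sum>c\<in>UNIV. Ts x i a c * Ts x j c b) - (\<Sum>c\<in>UNIV. Ts x j a c * Ts x i c b)
        = (\<Sum>k\<in>UNIV. Tv x k i j * Ts x k a b))
   \<and> (\<forall>x\<in>U. lie_iso_sp4 Tv x \<and> irreducible_rep Ts x)
   \<comment> \<open>[\<nabla>_i,\<nabla>_j] f = T^k_{ij} \<nabla>_k f on functions (R trivial on functions)\<close>
   \<and> (\<forall>f. smooth_on U f \<longrightarrow> (\<forall>x\<in>U. \<forall>i j.
        nabla_nabla_fun Gv f i j x - nabla_nabla_fun Gv f j i x = (\<Sum>k\<in>UNIV. Tv x k i j * pd k f x)))
   \<comment> \<open>[\<nabla>_i,\<nabla>_j] v = T^k_{ij} \<nabla>_k v + R_{ij}(v) on vector fields\<close>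
   \<and> (\<forall>v. (\<forall>l. smooth_on U (\<lambda>y. v y l)) \<longrightarrow> (\<forall>x\<in>U. \<forall>i j l.
        nabla_nabla_vec Gv v i j l x - nabla_nabla_vec Gv v j i l x
        = (\<Sum>k\<in>UNIV. Tv x k i j * nabla_vec Gv v k l x) + (\<Sum>k\<in>UNIV. Rv x l i j k * v x k)))
   \<comment> \<open>[\<nabla>_i,\<nabla>_j] \<psi> = T^k_{ij} \<nabla>_k \<psi> + R_{ij}(\<psi>) on spinor fields\<close>
   \<and> (\<forall>\<psi>. (\<forall>a. smooth_on U (\<lambda>y. \<psi> y a)) \<longrightarrow> (\<forall>x\<in>U. \<forall>i j a.
        nabla_nabla_spin Gv Gs \<psi> i j a x - nabla_nabla_spin Gv Gs \<psi> j i a x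
        = (\<Sum>k\<in>UNIV. Tv x k i j * nabla_spin Gs \<psi> k a x) + (\<Sum>b\<in>UNIV. Rs x a i j b * \<psi> x b)))
   \<comment> \<open>\<nabla>_k T^\<alpha>_{i\<beta>} = 0\<close>
   \<and> (\<forall>x\<in>U. \<forall>k i a b. nabla_Ts Gv Gs Ts k i a b x = 0)"

definition metric :: "(pt \<Rightarrow> 10 \<Rightarrow> 4 \<Rightarrow> 4 \<Rightarrow> real) \<Rightarrow> pt \<Rightarrow> 10 \<Rightarrow> 10 \<Rightarrow> real" where
  "metric Ts x i j = (\<Sum>a\<in>UNIV. \<Sum>b\<in>UNIV. Ts x i a b * Ts x j b a)"

definition inv_metric :: "(pt \<Rightarrow> 10 \<Rightarrow> 4 \<Rightarrow> 4 \<Rightarrow> real) \<Rightarrow> pt \<Rightarrow> 10 \<Rightarrow> 10 \<Rightarrow> real" where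
  "inv_metric Ts x i j = matrix_inv (\<chi> p q. metric Ts x p q) $ i $ j"

definition field_tensor :: "(pt \<Rightarrow> 4 \<Rightarrow> 10 \<Rightarrow> 10 \<Rightarrow> 4 \<Rightarrow> real) \<Rightarrow> pt \<Rightarrow> 10 \<Rightarrow> 10 \<Rightarrow> real" where
  "field_tensor Rs x i j = (1/4) * (\<Sum>a\<in>UNIV. Rs x a i j a)"

definition curv_on_F :: "(pt \<Rightarrow> 10 \<Rightarrow> 10 \<Rightarrow> 10 \<Rightarrow> 10 \<Rightarrow> real) \<Rightarrow> (pt \<Rightarrow> 4 \<Rightarrow> 10 \<Rightarrow> 10 \<Rightarrow> 4 \<Rightarrow> real)
    \<Rightarrow> pt \<Rightarrow> 10 \<Rightarrow> 10 \<Rightarrow> 10 \<Rightarrow> 10 \<Rightarrow> real" where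
  "curv_on_F Rv Rs x s t i j =
     - (\<Sum>a\<in>UNIV. Rv x a s t i * field_tensor Rs x a j) - (\<Sum>a\<in>UNIV. Rv x a s t j * field_tensor Rs x i a)"

end

theory Submission
  imports Defs
begin

text \<open>
  At each point the matrices \<open>T\<^sub>i = (T\<^sup>\<alpha>\<^sub>i\<^sub>\<beta>)\<close> form a faithful representation of the simple Lie
  algebra \<open>sp(4,\<real>)\<close>, so the metric \<open>g\<^sub>i\<^sub>j = tr (T\<^sub>i T\<^sub>j)\<close> is an invariant, nondegenerate form.
  Differentiating \<open>\<nabla>T = 0\<close> twice and antisymmetrising gives \<open>[R\<^sub>s\<^sub>t, T\<^sub>i] = R\<^sup>l\<^sub>s\<^sub>t\<^sub>i T\<^sub>l\<close>, where
  \<open>R\<^sub>s\<^sub>t\<close> is the spinor curvature; by invariance of the trace, the curvature on vectors is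
  therefore \<open>g\<close>-skew. Differentiating \<open>[T\<^sub>i, T\<^sub>j] = T\<^sup>k\<^sub>i\<^sub>j T\<^sub>k\<close> shows that the torsion \<open>-T\<^sup>k\<^sub>i\<^sub>j\<close>
  is parallel, and with the Jacobi identity this gives the first Bianchi identity. These
  symmetries make the Ricci contraction \<open>R\<^sup>s\<^sub>s\<^sub>t\<^sub>b\<close> symmetric and \<open>g\<^sup>i\<^sup>s R\<^sup>a\<^sub>s\<^sub>t\<^sub>i = -g\<^sup>a\<^sup>b R\<^sup>s\<^sub>s\<^sub>t\<^sub>b\<close>,
  so the contraction in question is a symmetric tensor paired with the antisymmetric \<open>F\<close>.
\<close>

definition commutator :: "real^'n^'n \<Rightarrow> real^'n^'n \<Rightarrow> real^'n^'n" where
  "commutator A B = A ** B - B ** A"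

lemma matrix_add_rdistrib: "(A + B) ** C = A ** C + B ** (C::real^'n^'n)"
  and matrix_diff_ldistrib: "C ** (A - B) = C ** A - C ** (B::real^'n^'n)"
  and matrix_diff_rdistrib: "(A - B) ** C = A ** C - B ** (C::real^'n^'n)"
  and matrix_neg_left: "(- A) ** C = - (A ** (C::real^'n^'n))"
  and matrix_neg_right: "C ** (- A) = - (C ** (A::real^'n^'n))"
  by (simp_all add: matrix_matrix_mult_def vec_eq_iff sum.distrib sum_subtractf sum_negf algebra_simps)

lemma transpose_uminus: "transpose (- A) = - transpose (A::real^'n^'n)"
  by (simp add: transpose_def vec_eq_iff)

lemma matrix_vector_mult_uminus: "(- A) *v v = - (A *v v :: real^'n)"
  by (simp add: matrix_vector_mult_def vec_eq_iff sum_negf)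

lemma quadratic_form_transpose: "v \<bullet> (transpose A *v v) = v \<bullet> (A *v v :: real^'n)"
  by (metis dot_lmul_matrix inner_commute transpose_matrix_vector)

lemma matrix_sum_ldistrib: "C ** (\<Sum>i\<in>I. F i) = (\<Sum>i\<in>I. C ** F i :: real^'n^'n)"
  and matrix_sum_rdistrib: "(\<Sum>i\<in>I. F i) ** C = (\<Sum>i\<in>I. F i ** C :: real^'n^'n)"
  by (induction I rule: infinite_finite_induct) (simp_all add: matrix_add_ldistrib matrix_add_rdistrib)

lemma trace_scaleR: "trace (c *\<^sub>R A) = c * trace (A::real^'n^'n)"
  by (simp add: trace_def sum_distrib_left)

lemma trace_sum: "trace (\<Sum>i\<in>I. F i) = (\<Sum>i\<in>I. trace (F i :: real^'n^'n))"
  using trace_0 by (induction I rule: infinite_finite_induct) (simp_all add: trace_add)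

lemma commutator_add_left: "commutator (A + B) C = commutator A C + commutator B C"
  and commutator_diff_left: "commutator (A - B) C = commutator A C - commutator B C"
  and commutator_diff_right: "commutator C (A - B) = commutator C A - commutator C B"
  and commutator_scaleR_left: "commutator (c *\<^sub>R A) C = c *\<^sub>R commutator A C"
  and commutator_scaleR_right: "commutator C (c *\<^sub>R A) = c *\<^sub>R commutator C A"
  by (simp_all add: commutator_def matrix_add_ldistrib matrix_add_rdistrib matrix_diff_ldistrib
      matrix_diff_rdistrib scalar_matrix_assoc matrix_scalar_ac algebra_simps)

lemma commutator_sum_left: "commutator (\<Sum>i\<in>I. F i) C = (\<Sum>i\<in>I. commutator (F i) C)"
  and commutator_sum_right: "commutator C (\<Sum>i\<in>I. F i) = (\<Sum>i\<in>I. commutator C (F i))"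
  by (simp_all add: commutator_def matrix_sum_ldistrib matrix_sum_rdistrib sum_subtractf)

lemma commutator_derivation:
  "commutator G (commutator A B) = commutator (commutator G A) B + commutator A (commutator G B)"
  by (simp add: commutator_def matrix_diff_ldistrib matrix_diff_rdistrib matrix_mul_assoc)

lemma commutator_jacobi:
  "commutator (commutator A B) C + commutator (commutator B C) A + commutator (commutator C A) B = 0"
  by (simp add: commutator_def matrix_diff_ldistrib matrix_diff_rdistrib matrix_mul_assoc)

lemma trace_commutator_mult: "trace (commutator A B ** C) = trace (B ** commutator C A)"
proof -
  have "trace (A ** B ** C) = trace (B ** C ** A)"
    using trace_mul_sym[of A "B ** C"] by (simp add: matrix_mul_assoc)
  then show ?thesis
    by (simp add: commutator_def matrix_diff_ldistrib matrix_diff_rdistrib trace_sub matrix_mul_assoc)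
qed

lemma trace_commutator_skew: "trace (commutator R A ** B) + trace (commutator R B ** A) = 0"
  using trace_mul_sym[of A "R ** B"] trace_mul_sym[of B "R ** A"]
  by (simp add: commutator_def matrix_diff_rdistrib trace_sub matrix_mul_assoc)

lemma trace_mult_transpose_eq_0_iff: "trace (M ** transpose M) = 0 \<longleftrightarrow> M = (0::real^'n^'n)"
proof
  assume "trace (M ** transpose M) = 0"
  then have "(\<Sum>i\<in>UNIV. M$i \<bullet> M$i) = 0"
    by (simp add: trace_def matrix_mult_transpose_dot_row row_def)
  then have "M$i \<bullet> M$i = 0" for i
    by (simp add: sum_nonneg_eq_0_iff)
  then show "M = 0" by (simp add: vec_eq_iff)
qed (simp add: trace_def)

lemma
  fixes M :: "real^'n^'n"
  assumes "invertible M"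
  shows matrix_inv_left: "matrix_inv M ** M = mat 1"
    and matrix_inv_right: "M ** matrix_inv M = mat 1"
  using someI_ex[OF assms[unfolded invertible_def]] by (simp_all add: matrix_inv_def)

lemma transpose_matrix_inv_symmetric:
  fixes M :: "real^'n^'n"
  assumes "invertible M" and "transpose M = M"
  shows "transpose (matrix_inv M) = matrix_inv M"
proof -
  have left: "transpose (matrix_inv M) ** M = mat 1"
    using arg_cong[OF matrix_inv_right[OF assms(1)], of transpose] assms(2)
    by (simp add: matrix_transpose_mul)
  have "transpose (matrix_inv M) = transpose (matrix_inv M) ** (M ** matrix_inv M)"
    by (simp add: matrix_inv_right[OF assms(1)])
  also have "\<dots> = matrix_inv M"
    by (simp add: matrix_mul_assoc left)
  finally show ?thesis .
qed

section \<open>Simplicity of the symplectic Lie algebra\<close>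

lemma subspace_scaleR_cancel: "subspace S \<Longrightarrow> c \<noteq> 0 \<Longrightarrow> c *\<^sub>R x \<in> S \<Longrightarrow> x \<in> S"
  using subspace_mul[of S "c *\<^sub>R x" "inverse c"] by simp

definition outer :: "real^'n \<Rightarrow> real^'n \<Rightarrow> real^'n^'n" where
  "outer a b = (\<chi> i j. a$i * b$j)"

lemma matrix_mult_outer: "C ** outer a b = outer (C *v a) b"
  by (simp add: outer_def vec_eq_iff matrix_matrix_mult_def matrix_vector_mult_def sum_distrib_right mult.assoc)

lemma outer_mult_matrix: "outer a b ** C = outer a (transpose C *v b)"
  by (simp add: outer_def vec_eq_iff matrix_matrix_mult_def matrix_vector_mult_def transpose_def
      sum_distrib_left mult_ac)

lemma outer_mult_outer: "outer a b ** outer c d = (b \<bullet> c) *\<^sub>R outer a d"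
  by (simp add: outer_def vec_eq_iff matrix_matrix_mult_def inner_vec_def sum_distrib_left sum_distrib_right mult_ac)

lemma outer_mult_vector: "outer a b *v c = (b \<bullet> c) *\<^sub>R a"
  by (simp add: outer_def vec_eq_iff matrix_vector_mult_def inner_vec_def sum_distrib_left mult_ac)

lemma outer_zero_left: "outer 0 c = 0"
  by (simp add: outer_def vec_eq_iff)

lemma matrix_eq_sum_outer: "M = (\<Sum>i\<in>UNIV. outer (axis i 1) (M$i))"
  and transpose_eq_sum_outer: "transpose M = (\<Sum>i\<in>UNIV. outer (M$i) (axis i 1))"
  by (simp_all add: vec_eq_iff outer_def sum_component axis_def transpose_def if_distrib if_distribR
      sum.delta cong: if_cong)

lemma symmetric_matrix_eq_0:
  fixes S :: "real^'n^'n"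
  assumes sym: "transpose S = S" and quadratic: "\<And>v. v \<bullet> (S *v v) = 0"
  shows "S = 0"
proof -
  have entry: "axis i 1 \<bullet> (S *v axis j 1) = S$i$j" for i j
    by (simp add: inner_axis' matrix_vector_mult_basis column_def)
  have "S$j$i = S$i$j" for i j
    using arg_cong[OF sym, of "\<lambda>M. M$i$j"] by (simp add: transpose_def)
  moreover have "S$i$i + S$i$j + S$j$i + S$j$j = 0" for i j
    using quadratic[of "axis i 1 + axis j 1"]
    by (simp add: matrix_vector_right_distrib inner_add_left inner_add_right entry)
  moreover have "S$i$i = 0" for i
    using quadratic[of "axis i 1"] by (simp add: entry)
  ultimately show ?thesis by (simp add: vec_eq_iff)
qed

locale symplectic_form =
  fixes J :: "real^'n^'n"
  assumes transpose_J: "transpose J = - J"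
    and J_mult_J: "J ** J = - mat 1"
begin

definition sp :: "(real^'n^'n) set" where
  "sp = {A. transpose A ** J + J ** A = 0}"

definition sym_outer :: "real^'n \<Rightarrow> real^'n \<Rightarrow> real^'n^'n" where
  "sym_outer a b = (outer a b + outer b a) ** J"

definition sp_ideal :: "(real^'n^'n) set \<Rightarrow> bool" where
  "sp_ideal I \<longleftrightarrow> subspace I \<and> I \<subseteq> sp \<and> (\<forall>X\<in>sp. \<forall>A\<in>I. commutator X A \<in> I)"

lemma isotropic: "v \<bullet> (J *v v) = 0"
  using quadratic_form_transpose[of v J] by (simp add: transpose_J matrix_vector_mult_uminus)

lemma J_mult_vector_eq_0_iff: "J *v v = 0 \<longleftrightarrow> v = 0"
proof
  assume "J *v v = 0"
  then have "J *v (J *v v) = 0" by simp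
  then show "v = 0" by (simp add: matrix_vector_mul_assoc J_mult_J matrix_vector_mult_uminus)
qed simp

lemma J_mult_sp: "A \<in> sp \<Longrightarrow> J ** A = - (transpose A ** J)"
  unfolding sp_def by (simp add: eq_neg_iff_add_eq_0 add.commute)

lemma symmetric_mult_J_in_sp:
  assumes "transpose S = S"
  shows "S ** J \<in> sp"
  using assms by (simp add: sp_def matrix_transpose_mul transpose_J matrix_neg_left matrix_neg_right
      matrix_mul_assoc)

lemma sp_eq_symmetric_mult_J:
  assumes "A \<in> sp"
  obtains S where "transpose S = S" and "A = S ** J"
proof
  have "transpose A ** J ** J = - (J ** A) ** J"
    using J_mult_sp[OF assms] by (simp add: matrix_neg_left)
  then have "transpose A = J ** A ** J"
    by (simp add: J_mult_J matrix_neg_right matrix_neg_left flip: matrix_mul_assoc)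
  then show "transpose (- (A ** J)) = - (A ** J)"
    by (simp add: matrix_transpose_mul transpose_J matrix_neg_left matrix_neg_right
        transpose_uminus matrix_mul_assoc J_mult_J)
  show "A = - (A ** J) ** J"
    by (simp add: matrix_neg_left J_mult_J matrix_neg_right flip: matrix_mul_assoc)
qed

lemma sym_outer_commute: "sym_outer a b = sym_outer b a"
  by (simp add: sym_outer_def add.commute)

lemma sym_outer_in_sp: "sym_outer a b \<in> sp"
  unfolding sym_outer_def
  by (rule symmetric_mult_J_in_sp) (simp add: outer_def transpose_def vec_eq_iff mult.commute)

lemma commutator_sym_outer:
  assumes "X \<in> sp"
  shows "commutator X (sym_outer a b) = sym_outer (X *v a) b + sym_outer a (X *v b)"
proof -
  have "X ** sym_outer a b = (outer (X *v a) b + outer (X *v b) a) ** J"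
    by (simp add: sym_outer_def matrix_mul_assoc matrix_add_ldistrib matrix_mult_outer)
  moreover have "sym_outer a b ** X = - ((outer a (X *v b) + outer b (X *v a)) ** J)"
    unfolding sym_outer_def matrix_mul_assoc[symmetric] J_mult_sp[OF assms] matrix_neg_right
    by (simp add: matrix_mul_assoc matrix_add_rdistrib outer_mult_matrix)
  ultimately have "commutator X (sym_outer a b)
      = (outer (X *v a) b + outer (X *v b) a) ** J + (outer a (X *v b) + outer b (X *v a)) ** J"
    by (simp add: commutator_def)
  then show ?thesis by (simp add: sym_outer_def matrix_add_rdistrib add_ac)
qed

lemma sp_subset_span_sym_outer: "sp \<subseteq> span (range (case_prod sym_outer))"
proof
  fix A assume "A \<in> sp"
  then obtain S where sym: "transpose S = S" and A: "A = S ** J"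
    by (rule sp_eq_symmetric_mult_J)
  have "2 *\<^sub>R S = S + transpose S" using sym by (simp add: scaleR_2)
  also have "\<dots> = (\<Sum>i\<in>UNIV. outer (axis i 1) (S$i) + outer (S$i) (axis i 1))"
    by (subst (1) matrix_eq_sum_outer) (simp add: transpose_eq_sum_outer sum.distrib)
  finally have "2 *\<^sub>R A = (\<Sum>i\<in>UNIV. sym_outer (axis i 1) (S$i))"
    by (simp add: A sym_outer_def scalar_matrix_assoc matrix_sum_rdistrib)
  also have "\<dots> \<in> span (range (case_prod sym_outer))"
    by (intro span_sum span_base) auto
  finally show "A \<in> span (range (case_prod sym_outer))"
    by (rule subspace_scaleR_cancel[OF subspace_span, rotated]) simp
qed

lemma sp_transitive:
  assumes "v \<noteq> 0"
  obtains X where "X \<in> sp" and "X *v v = w"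
proof
  let ?u = "J *v v"
  have "?u \<noteq> 0" using assms J_mult_vector_eq_0_iff by blast
  define b where "b = (1 / (?u \<bullet> ?u)) *\<^sub>R ?u"
  have bu: "b \<bullet> ?u = 1" using \<open>?u \<noteq> 0\<close> by (simp add: b_def)
  define a where "a = w - ((w \<bullet> ?u) / 2) *\<^sub>R b"
  have au: "a \<bullet> ?u = (w \<bullet> ?u) / 2" by (simp add: a_def inner_diff_left bu)
  have "sym_outer a b *v v = (b \<bullet> ?u) *\<^sub>R a + (a \<bullet> ?u) *\<^sub>R b"
    by (simp add: sym_outer_def outer_mult_vector matrix_vector_mult_add_rdistrib
        flip: matrix_vector_mul_assoc)
  also have "\<dots> = w" unfolding bu au by (simp add: a_def)
  finally show "sym_outer a b *v v = w" .
qed (rule sym_outer_in_sp)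

text \<open>Since \<open>v\<close> is isotropic, \<open>N = outer v v ** J\<close> satisfies \<open>N ** N = 0\<close> and
  \<open>N ** A ** N = (v \<bullet> ((J ** A) *v v)) *\<^sub>R N\<close>; so a double commutator extracts \<open>N\<close> from any \<open>A\<close>.\<close>

lemma double_commutator_sym_outer:
  "commutator (sym_outer v v) (commutator (sym_outer v v) A) = (-4 * (v \<bullet> ((J ** A) *v v))) *\<^sub>R sym_outer v v"
proof -
  define N where "N = outer v v ** J"
  have Q: "sym_outer v v = 2 *\<^sub>R N"
    by (simp add: N_def sym_outer_def scalar_matrix_assoc scaleR_2)
  have NN: "N ** N = 0"
    unfolding N_def matrix_mul_assoc[symmetric]
    by (simp add: matrix_mul_assoc matrix_mult_outer outer_mult_vector isotropic outer_zero_left)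
  have "N ** A ** N = outer v v ** ((J ** A) ** outer v v) ** J"
    by (simp add: N_def matrix_mul_assoc)
  then have NAN: "N ** A ** N = (v \<bullet> ((J ** A) *v v)) *\<^sub>R N"
    unfolding matrix_mult_outer[of "J ** A"] outer_mult_outer by (simp add: N_def scalar_matrix_assoc)
  have "commutator N (commutator N A) = (N ** N) ** A - 2 *\<^sub>R (N ** A ** N) + A ** (N ** N)"
    by (simp add: commutator_def matrix_diff_ldistrib matrix_diff_rdistrib matrix_mul_assoc scaleR_2)
  then show ?thesis by (simp add: Q NN NAN commutator_scaleR_left commutator_scaleR_right)
qed

lemma sp_ideal_contains_sym_outer_square:
  assumes "sp_ideal I" and "A \<in> I" and "A \<noteq> 0"
  obtains v where "v \<noteq> 0" and "sym_outer v v \<in> I"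
proof -
  have sub: "subspace I" and "A \<in> sp"
    using assms unfolding sp_ideal_def by blast+
  have "transpose (J ** A) = J ** A"
    by (simp add: J_mult_sp[OF \<open>A \<in> sp\<close>] matrix_transpose_mul transpose_J transpose_uminus
        matrix_neg_left)
  moreover have "J ** A \<noteq> 0"
  proof
    assume "J ** A = 0"
    then have "J ** (J ** A) = 0" by simp
    then show False using \<open>A \<noteq> 0\<close> by (simp add: matrix_mul_assoc J_mult_J matrix_neg_left)
  qed
  ultimately obtain v where q: "v \<bullet> ((J ** A) *v v) \<noteq> 0"
    using symmetric_matrix_eq_0 by blast
  have "commutator (sym_outer v v) (commutator (sym_outer v v) A) \<in> I"
    using assms(1,2) sym_outer_in_sp unfolding sp_ideal_def by blast
  then have "(-4 * (v \<bullet> ((J ** A) *v v))) *\<^sub>R sym_outer v v \<in> I"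
    unfolding double_commutator_sym_outer .
  then have "sym_outer v v \<in> I"
    by (rule subspace_scaleR_cancel[OF sub, rotated]) (use q in simp)
  moreover have "v \<noteq> 0" using q by auto
  ultimately show thesis using that by blast
qed

theorem sp_simple:
  assumes "sp_ideal I" and "I \<noteq> {0}"
  shows "I = sp"
proof -
  have sub: "subspace I" and "I \<subseteq> sp" and ideal: "\<And>X B. X \<in> sp \<Longrightarrow> B \<in> I \<Longrightarrow> commutator X B \<in> I"
    using assms(1) unfolding sp_ideal_def by auto
  obtain A where "A \<in> I" "A \<noteq> 0" using assms(2) subspace_0[OF sub] by blast
  then obtain v where "v \<noteq> 0" and vv: "sym_outer v v \<in> I"
    using sp_ideal_contains_sym_outer_square[OF assms(1)] by blast
  have wv: "sym_outer w v \<in> I" for w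
  proof -
    obtain X where X: "X \<in> sp" "X *v v = w" using sp_transitive[OF \<open>v \<noteq> 0\<close>] .
    then have "commutator X (sym_outer v v) = 2 *\<^sub>R sym_outer w v"
      by (simp add: commutator_sym_outer sym_outer_commute[of v w] scaleR_2)
    then show ?thesis
      using ideal[OF X(1) vv] subspace_scaleR_cancel[OF sub, of 2] by simp
  qed
  have "sym_outer w z \<in> I" for w z
  proof -
    obtain X where X: "X \<in> sp" "X *v v = z" using sp_transitive[OF \<open>v \<noteq> 0\<close>] .
    have "sym_outer (X *v w) v + sym_outer w z \<in> I"
      using ideal[OF X(1) wv[of w]] by (simp add: commutator_sym_outer[OF X(1)] X(2))
    from subspace_diff[OF sub this wv[of "X *v w"]] show ?thesis by simp
  qed
  then have "span (range (case_prod sym_outer)) \<subseteq> I"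
    by (intro span_minimal sub) auto
  then show ?thesis using sp_subset_span_sym_outer \<open>I \<subseteq> sp\<close> by blast
qed

end

definition to_matrix :: "('n \<Rightarrow> 'n \<Rightarrow> real) \<Rightarrow> real^'n^'n" where
  "to_matrix A = (\<chi> a b. A a b)"

lemma to_matrix_inject: "to_matrix A = to_matrix B \<longleftrightarrow> A = B"
  by (auto simp: to_matrix_def vec_eq_iff fun_eq_iff)

lemma to_matrix_nth: "to_matrix (\<lambda>a b. M$a$b) = M"
  by (simp add: to_matrix_def vec_eq_iff)

lemma to_matrix_mat_comm: "to_matrix (mat_comm A B) = commutator (to_matrix A) (to_matrix B)"
  by (simp add: to_matrix_def mat_comm_def commutator_def vec_eq_iff matrix_matrix_mult_def)

definition Jsp_matrix :: "real^4^4" where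
  "Jsp_matrix = to_matrix Jsp"

interpretation Jsp: symplectic_form Jsp_matrix
  by unfold_locales
    (simp_all add: Jsp_matrix_def to_matrix_def Jsp_def vec_eq_iff transpose_def matrix_matrix_mult_def
      mat_def forall_4 sum_4)

lemma to_matrix_in_sp_iff: "to_matrix A \<in> Jsp.sp \<longleftrightarrow> A \<in> sp4"
  unfolding Jsp.sp_def by (simp add: sp4_def Jsp_matrix_def to_matrix_def vec_eq_iff matrix_matrix_mult_def
      transpose_def)

lemma subspace_image_to_matrix:
  fixes \<phi> :: "('i \<Rightarrow> real) \<Rightarrow> ('n::finite \<Rightarrow> 'n \<Rightarrow> real)"
  assumes \<phi>_linear: "\<And>a b u v. \<phi> (\<lambda>k. a * u k + b * v k) = (\<lambda>p q. a * \<phi> u p q + b * \<phi> v p q)"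
    and linear: "\<And>u v a b. u \<in> K \<Longrightarrow> v \<in> K \<Longrightarrow> (\<lambda>k. a * u k + b * v k) \<in> K"
    and "u \<in> K"
  shows "subspace (to_matrix ` \<phi> ` K)"
  unfolding subspace_def
proof (intro conjI ballI allI)
  have "0 = to_matrix (\<phi> (\<lambda>k. 0 * u k + 0 * u k))"
    unfolding \<phi>_linear by (simp add: to_matrix_def vec_eq_iff)
  then show "0 \<in> to_matrix ` \<phi> ` K" using linear \<open>u \<in> K\<close> by blast
next
  fix A B assume "A \<in> to_matrix ` \<phi> ` K" "B \<in> to_matrix ` \<phi> ` K"
  then obtain a b where "a \<in> K" "b \<in> K" "A = to_matrix (\<phi> a)" "B = to_matrix (\<phi> b)" by blast
  moreover have "A + B = to_matrix (\<phi> (\<lambda>k. 1 * a k + 1 * b k))"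
    unfolding \<phi>_linear calculation by (simp add: to_matrix_def vec_eq_iff)
  ultimately show "A + B \<in> to_matrix ` \<phi> ` K" using linear by blast
next
  fix c A assume "A \<in> to_matrix ` \<phi> ` K"
  then obtain a where "a \<in> K" "A = to_matrix (\<phi> a)" by blast
  moreover have "c *\<^sub>R A = to_matrix (\<phi> (\<lambda>k. c * a k + 0 * a k))"
    unfolding \<phi>_linear calculation by (simp add: to_matrix_def vec_eq_iff)
  ultimately show "c *\<^sub>R A \<in> to_matrix ` \<phi> ` K" using linear by blast
qed

theorem lie_iso_sp4_ideal_eq_UNIV:
  assumes iso: "lie_iso_sp4 Tv x"
    and linear: "\<And>u v a b. u \<in> K \<Longrightarrow> v \<in> K \<Longrightarrow> (\<lambda>k. a * u k + b * v k) \<in> K"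
    and ideal: "\<And>w u. u \<in> K \<Longrightarrow> bracket Tv x w u \<in> K"
    and "u \<in> K" "u \<noteq> (\<lambda>k. 0)"
  shows "K = UNIV"
proof -
  obtain \<phi> :: "(10 \<Rightarrow> real) \<Rightarrow> (4 \<Rightarrow> 4 \<Rightarrow> real)" where
    \<phi>_linear: "\<And>a b u v. \<phi> (\<lambda>k. a * u k + b * v k) = (\<lambda>p q. a * \<phi> u p q + b * \<phi> v p q)"
    and "inj \<phi>" and "range \<phi> = sp4"
    and \<phi>_bracket: "\<And>u v. \<phi> (bracket Tv x u v) = mat_comm (\<phi> u) (\<phi> v)"
    using iso unfolding lie_iso_sp4_def by blast
  define I where "I = to_matrix ` \<phi> ` K"
  have "Jsp.sp_ideal I"
    unfolding Jsp.sp_ideal_def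
  proof (intro conjI ballI)
    show "subspace I"
      unfolding I_def using \<phi>_linear linear \<open>u \<in> K\<close> by (rule subspace_image_to_matrix)
    show "I \<subseteq> Jsp.sp"
      unfolding I_def using \<open>range \<phi> = sp4\<close> to_matrix_in_sp_iff by blast
    fix X A assume "X \<in> Jsp.sp" "A \<in> I"
    then obtain a where "a \<in> K" "A = to_matrix (\<phi> a)" unfolding I_def by blast
    obtain w where "\<phi> w = (\<lambda>p q. X$p$q)"
      using \<open>X \<in> Jsp.sp\<close> \<open>range \<phi> = sp4\<close> to_matrix_in_sp_iff[of "\<lambda>p q. X$p$q"]
      by (metis rangeE to_matrix_nth)
    then have "commutator X A = to_matrix (\<phi> (bracket Tv x w a))"
      by (simp add: \<phi>_bracket to_matrix_mat_comm to_matrix_nth \<open>A = _\<close>)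
    then show "commutator X A \<in> I" unfolding I_def using ideal[OF \<open>a \<in> K\<close>] by blast
  qed
  moreover have "to_matrix (\<phi> u) \<noteq> to_matrix (\<phi> (\<lambda>k. 0 * u k + 0 * u k))"
    using \<open>inj \<phi>\<close> \<open>u \<noteq> (\<lambda>k. 0)\<close> by (simp add: to_matrix_inject inj_eq)
  then have "to_matrix (\<phi> u) \<noteq> 0"
    unfolding \<phi>_linear by (simp add: to_matrix_def vec_eq_iff)
  then have "I \<noteq> {0}" using \<open>u \<in> K\<close> by (auto simp: I_def)
  ultimately have "I = Jsp.sp" by (rule Jsp.sp_simple)
  show "K = UNIV"
  proof (intro set_eqI iffI)
    fix v :: "10 \<Rightarrow> real"
    have "to_matrix (\<phi> v) \<in> I"
      using \<open>I = Jsp.sp\<close> \<open>range \<phi> = sp4\<close> to_matrix_in_sp_iff by blast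
    then show "v \<in> K" using \<open>inj \<phi>\<close> by (auto simp: I_def to_matrix_inject dest: injD)
  qed auto
qed

section \<open>The spinor representation and its trace form\<close>

definition gen_matrix :: "(pt \<Rightarrow> 10 \<Rightarrow> 4 \<Rightarrow> 4 \<Rightarrow> real) \<Rightarrow> pt \<Rightarrow> 10 \<Rightarrow> real^4^4" where
  "gen_matrix Ts x i = to_matrix (Ts x i)"

definition rep_matrix :: "(pt \<Rightarrow> 10 \<Rightarrow> 4 \<Rightarrow> 4 \<Rightarrow> real) \<Rightarrow> pt \<Rightarrow> (10 \<Rightarrow> real) \<Rightarrow> real^4^4" where
  "rep_matrix Ts x u = to_matrix (rep Ts x u)"

lemma rep_matrix_eq_sum: "rep_matrix Ts x u = (\<Sum>i\<in>UNIV. u i *\<^sub>R gen_matrix Ts x i)"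
  by (simp add: rep_matrix_def gen_matrix_def to_matrix_def rep_def vec_eq_iff sum_component)

lemma rep_matrix_linear:
  "rep_matrix Ts x (\<lambda>k. a * u k + b * v k) = a *\<^sub>R rep_matrix Ts x u + b *\<^sub>R rep_matrix Ts x v"
  by (simp add: rep_matrix_eq_sum scaleR_add_left sum.distrib scaleR_sum_right)

lemma metric_eq_trace: "metric Ts x i j = trace (gen_matrix Ts x i ** gen_matrix Ts x j)"
  by (simp add: metric_def trace_def matrix_matrix_mult_def gen_matrix_def to_matrix_def)

lemma trace_rep_matrix_mult:
  "trace (rep_matrix Ts x u ** rep_matrix Ts x w) = (\<Sum>i\<in>UNIV. \<Sum>j\<in>UNIV. u i * w j * metric Ts x i j)"
  by (simp add: rep_matrix_eq_sum matrix_sum_ldistrib matrix_sum_rdistrib trace_sum matrix_scalar_ac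
      trace_scaleR metric_eq_trace sum_distrib_left mult_ac flip: scalar_matrix_assoc)
    (rule sum.swap)

lemma metric_commute: "metric Ts x i j = metric Ts x j i"
  unfolding metric_eq_trace by (rule trace_mul_sym)

locale framework_point =
  fixes Tv :: "pt \<Rightarrow> 10 \<Rightarrow> 10 \<Rightarrow> 10 \<Rightarrow> real" and Ts :: "pt \<Rightarrow> 10 \<Rightarrow> 4 \<Rightarrow> 4 \<Rightarrow> real" and x :: pt
  assumes structure_relation: "\<forall>i j a b.
      (\<Sum>c\<in>UNIV. Ts x i a c * Ts x j c b) - (\<Sum>c\<in>UNIV. Ts x j a c * Ts x i c b)
      = (\<Sum>k\<in>UNIV. Tv x k i j * Ts x k a b)"
    and iso: "lie_iso_sp4 Tv x"
    and irreducible: "irreducible_rep Ts x"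
begin

lemma commutator_gen_matrix:
  "commutator (gen_matrix Ts x i) (gen_matrix Ts x j) = (\<Sum>k\<in>UNIV. Tv x k i j *\<^sub>R gen_matrix Ts x k)"
  using structure_relation
  by (simp add: commutator_def gen_matrix_def to_matrix_def vec_eq_iff matrix_matrix_mult_def sum_component)

lemma rep_matrix_bracket:
  "rep_matrix Ts x (bracket Tv x u v) = commutator (rep_matrix Ts x u) (rep_matrix Ts x v)"
proof -
  have "commutator (rep_matrix Ts x u) (rep_matrix Ts x v)
      = (\<Sum>i\<in>UNIV. \<Sum>j\<in>UNIV. (u i * v j) *\<^sub>R commutator (gen_matrix Ts x i) (gen_matrix Ts x j))"
    by (simp add: rep_matrix_eq_sum commutator_sum_left commutator_sum_right commutator_scaleR_left
        commutator_scaleR_right scaleR_sum_right)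
      (subst sum.swap, simp add: mult.commute)
  also have "\<dots> = (\<Sum>i\<in>UNIV. \<Sum>j\<in>UNIV. \<Sum>k\<in>UNIV. (Tv x k i j * u i * v j) *\<^sub>R gen_matrix Ts x k)"
    by (simp add: commutator_gen_matrix scaleR_sum_right mult_ac)
  also have "\<dots> = (\<Sum>i\<in>UNIV. \<Sum>k\<in>UNIV. \<Sum>j\<in>UNIV. (Tv x k i j * u i * v j) *\<^sub>R gen_matrix Ts x k)"
    by (rule sum.cong[OF refl], rule sum.swap)
  also have "\<dots> = (\<Sum>k\<in>UNIV. \<Sum>i\<in>UNIV. \<Sum>j\<in>UNIV. (Tv x k i j * u i * v j) *\<^sub>R gen_matrix Ts x k)"
    by (rule sum.swap)
  also have "\<dots> = rep_matrix Ts x (bracket Tv x u v)"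
    by (simp add: rep_matrix_eq_sum bracket_def scaleR_sum_left)
  finally show ?thesis by (rule sym)
qed

lemma gen_matrix_nonzero: "\<exists>i. gen_matrix Ts x i \<noteq> 0"
proof (rule ccontr)
  assume "\<nexists>i. gen_matrix Ts x i \<noteq> 0"
  then have "Ts x i a b = 0" for i a b
    by (auto simp: gen_matrix_def to_matrix_def vec_eq_iff)
  then have invariant: "(\<chi> a. \<Sum>b\<in>UNIV. rep Ts x u a b * \<psi> $ b) = 0" for u \<psi>
    by (simp add: rep_def vec_eq_iff)
  define W :: "(real^4) set" where "W = span {axis 0 1}"
  have "subspace W" unfolding W_def by (rule subspace_span)
  then have "W = {0} \<or> W = UNIV"
    using irreducible unfolding irreducible_rep_def invariant by (simp add: subspace_0)
  moreover have "axis 0 1 \<in> W" unfolding W_def by (rule span_base) simp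
  moreover have "axis 1 1 \<notin> W"
  proof
    assume "axis 1 1 \<in> W"
    then obtain c where "axis 1 1 = c *\<^sub>R (axis 0 1 :: real^4)"
      unfolding W_def span_singleton by blast
    then have "(axis 1 1 :: real^4) $ 1 = (c *\<^sub>R axis 0 1 :: real^4) $ 1" by simp
    then show False by (simp add: axis_def)
  qed
  ultimately show False by (auto simp: axis_eq_0_iff)
qed

lemma rep_matrix_eq_0_iff: "rep_matrix Ts x u = 0 \<longleftrightarrow> u = (\<lambda>k. 0)"
proof
  assume u: "rep_matrix Ts x u = 0"
  show "u = (\<lambda>k. 0)"
  proof (rule ccontr)
    assume "u \<noteq> (\<lambda>k. 0)"
    have "{u. rep_matrix Ts x u = 0} = UNIV"
      by (rule lie_iso_sp4_ideal_eq_UNIV[OF iso _ _ _ \<open>u \<noteq> (\<lambda>k. 0)\<close>])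
        (auto simp: u rep_matrix_linear rep_matrix_bracket commutator_def)
    then have "rep_matrix Ts x (\<lambda>k. if k = i then 1 else 0) = 0" for i by blast
    then have "gen_matrix Ts x i = 0" for i
      by (simp add: rep_matrix_eq_sum if_distrib if_distribR sum.delta cong: if_cong)
    then show False using gen_matrix_nonzero by blast
  qed
qed (simp add: rep_matrix_eq_sum)

text \<open>A symmetric \<open>M\<close> with \<open>trace (M ** M) = 0\<close> vanishes. So if the trace form were zero,
  the antisymmetric part of the faithful image would determine \<open>u\<close>, injecting \<open>\<real>\<^sup>1\<^sup>0\<close> into \<open>\<real>\<^sup>6\<close>.\<close>

lemma trace_form_nonzero: "\<exists>u w. trace (rep_matrix Ts x u ** rep_matrix Ts x w) \<noteq> 0"
proof (rule ccontr)
  assume "\<nexists>u w. trace (rep_matrix Ts x u ** rep_matrix Ts x w) \<noteq> 0"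
  then have trace_0: "trace (rep_matrix Ts x u ** rep_matrix Ts x w) = 0" for u w by blast
  define f :: "real^10 \<Rightarrow> real \<times> real \<times> real \<times> real \<times> real \<times> real" where
    "f y = (let M = rep_matrix Ts x (\<lambda>k. y$k) in
      (M$4$1 - M$1$4, M$4$2 - M$2$4, M$4$3 - M$3$4, M$1$2 - M$2$1, M$1$3 - M$3$1, M$2$3 - M$3$2))" for y
  have "continuous_on UNIV f"
    unfolding f_def Let_def rep_matrix_eq_sum by (simp add: sum_component) (intro continuous_intros)
  moreover have "inj f"
  proof (rule injI)
    fix y z assume "f y = f z"
    define d where "d = (\<lambda>k. 1 * y$k + (-1) * z$k)"
    have d: "rep_matrix Ts x d = rep_matrix Ts x (\<lambda>k. y$k) - rep_matrix Ts x (\<lambda>k. z$k)"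
      unfolding d_def rep_matrix_linear by simp
    have "rep_matrix Ts x d $ p $ q = rep_matrix Ts x d $ q $ p" for p q
      using \<open>f y = f z\<close> exhaust_4[of p] exhaust_4[of q] unfolding f_def Let_def d by auto
    then have "transpose (rep_matrix Ts x d) = rep_matrix Ts x d"
      by (simp add: transpose_def vec_eq_iff)
    then have "rep_matrix Ts x d = 0"
      using trace_0[of d d] trace_mult_transpose_eq_0_iff by metis
    then have "d = (\<lambda>k. 0)" by (simp add: rep_matrix_eq_0_iff)
    then show "y = z" by (simp add: d_def vec_eq_iff fun_eq_iff)
  qed
  ultimately have "DIM(real^10) \<le> DIM(real \<times> real \<times> real \<times> real \<times> real \<times> real)"
    by (intro invariance_of_dimension[of UNIV f]) auto
  then show False by simp
qed

text \<open>The radical of the invariant trace form is an ideal.\<close>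

lemma trace_form_nondegenerate:
  assumes "\<And>w. trace (rep_matrix Ts x u ** rep_matrix Ts x w) = 0"
  shows "u = (\<lambda>k. 0)"
proof (rule ccontr)
  assume "u \<noteq> (\<lambda>k. 0)"
  let ?K = "{u. \<forall>w. trace (rep_matrix Ts x u ** rep_matrix Ts x w) = 0}"
  have "?K = UNIV"
  proof (rule lie_iso_sp4_ideal_eq_UNIV[OF iso _ _ _ \<open>u \<noteq> (\<lambda>k. 0)\<close>])
    fix w v assume "v \<in> ?K"
    have "trace (rep_matrix Ts x (bracket Tv x w v) ** rep_matrix Ts x z)
        = trace (rep_matrix Ts x v ** rep_matrix Ts x (bracket Tv x z w))" for z
      unfolding rep_matrix_bracket by (rule trace_commutator_mult)
    then show "bracket Tv x w v \<in> ?K" using \<open>v \<in> ?K\<close> by simp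
  qed (use assms in \<open>simp_all add: rep_matrix_linear matrix_add_rdistrib trace_add trace_scaleR
      flip: scalar_matrix_assoc\<close>)
  then show False using trace_form_nonzero by blast
qed

lemma metric_invertible: "invertible (\<chi> p q. metric Ts x p q)"
  unfolding invertible_left_inverse matrix_left_invertible_ker
proof (intro allI impI)
  fix c :: "real^10" assume "(\<chi> p q. metric Ts x p q) *v c = 0"
  then have c: "(\<Sum>j\<in>UNIV. metric Ts x i j * c$j) = 0" for i
    by (simp add: vec_eq_iff matrix_vector_mult_def)
  have "trace (rep_matrix Ts x (\<lambda>k. c$k) ** rep_matrix Ts x w) = 0" for w
  proof -
    have "trace (rep_matrix Ts x (\<lambda>k. c$k) ** rep_matrix Ts x w)
        = (\<Sum>i\<in>UNIV. w i * (\<Sum>j\<in>UNIV. metric Ts x i j * c$j))"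
      by (subst trace_mul_sym) (simp add: trace_rep_matrix_mult sum_distrib_left mult_ac)
    then show ?thesis by (simp add: c)
  qed
  then have "(\<lambda>k. c$k) = (\<lambda>k. 0)" by (rule trace_form_nondegenerate)
  then show "c = 0" by (simp add: vec_eq_iff fun_eq_iff)
qed

lemma inv_metric_mult_metric: "(\<Sum>b\<in>UNIV. inv_metric Ts x a b * metric Ts x b c) = (if a = c then 1 else 0)"
  using arg_cong[OF matrix_inv_left[OF metric_invertible], of "\<lambda>M. M$a$c"]
  by (simp add: inv_metric_def matrix_matrix_mult_def mat_def)

lemma inv_metric_commute: "inv_metric Ts x a b = inv_metric Ts x b a"
  using arg_cong[OF transpose_matrix_inv_symmetric[OF metric_invertible], of "\<lambda>M. M$a$b"]
  by (simp add: inv_metric_def transpose_def vec_eq_iff metric_commute)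

lemma gen_matrix_independent: "(\<Sum>k\<in>UNIV. c k *\<^sub>R gen_matrix Ts x k) = 0 \<Longrightarrow> c k = 0"
  using rep_matrix_eq_0_iff[of c] by (simp add: rep_matrix_eq_sum fun_eq_iff)

lemma structure_constants_jacobi:
  "(\<Sum>m\<in>UNIV. Tv x m i j * Tv x l m k + Tv x m j k * Tv x l m i + Tv x m k i * Tv x l m j) = 0"
proof -
  let ?T = "gen_matrix Ts x"
  have double: "commutator (commutator (?T a) (?T b)) (?T d)
      = (\<Sum>l\<in>UNIV. (\<Sum>m\<in>UNIV. Tv x m a b * Tv x l m d) *\<^sub>R ?T l)" for a b d
    by (simp add: commutator_gen_matrix commutator_sum_left commutator_scaleR_left scaleR_sum_right
        scaleR_sum_left) (rule sum.swap)
  have "(\<Sum>l\<in>UNIV. (\<Sum>m\<in>UNIV. Tv x m i j * Tv x l m k + Tv x m j k * Tv x l m i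
      + Tv x m k i * Tv x l m j) *\<^sub>R ?T l) = 0"
    using commutator_jacobi[of "?T i" "?T j" "?T k"]
    by (simp add: double sum.distrib scaleR_add_left)
  then show ?thesis by (rule gen_matrix_independent)
qed

end

lemma pd_has_real_derivative:
  assumes "f differentiable at x"
  shows "((\<lambda>t. f (x + t *\<^sub>R axis k 1)) has_real_derivative pd k f x) (at 0)"
proof -
  have "(\<lambda>t::real. x + t *\<^sub>R axis k 1) differentiable at 0"
    by (intro derivative_intros)
  then have "(f \<circ> (\<lambda>t. x + t *\<^sub>R axis k 1)) differentiable at 0"
    using assms by (intro differentiable_chain_at) simp_all
  then show ?thesis
    unfolding pd_def DERIV_deriv_iff_real_differentiable by (simp add: o_def)
qed

lemma pd_diff: "f differentiable at x \<Longrightarrow> g differentiable at x \<Longrightarrow> pd k (\<lambda>y. f y - g y) x = pd k f x - pd k g x"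
  unfolding pd_def[of k "\<lambda>y. f y - g y"] by (intro DERIV_imp_deriv DERIV_diff pd_has_real_derivative)

lemma pd_mult:
  assumes "f differentiable at x" "g differentiable at x"
  shows "pd k (\<lambda>y. f y * g y) x = pd k f x * g x + f x * pd k g x"
  unfolding pd_def[of k "\<lambda>y. f y * g y"]
  using DERIV_mult[OF pd_has_real_derivative[OF assms(1)] pd_has_real_derivative[OF assms(2)], of k k]
  by (intro DERIV_imp_deriv) (simp add: mult.commute)

lemma pd_sum:
  "(\<And>i. i \<in> I \<Longrightarrow> f i differentiable at x) \<Longrightarrow> pd k (\<lambda>y. \<Sum>i\<in>I. f i y) x = (\<Sum>i\<in>I. pd k (f i) x)"
  unfolding pd_def[of k "\<lambda>y. \<Sum>i\<in>I. f i y"]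
  by (intro DERIV_imp_deriv DERIV_sum pd_has_real_derivative) auto

lemma pd_const: "pd k (\<lambda>y. c) x = 0"
  by (simp add: pd_def)

lemma pd_coordinate: "pd k (\<lambda>y. y$m) x = (if k = m then 1 else 0)"
proof -
  have "((\<lambda>t. (x + t *\<^sub>R axis k 1)$m) has_real_derivative (axis k 1 :: pt)$m) (at 0)"
    by (simp add: axis_def) (auto intro!: derivative_eq_intros)
  then show ?thesis unfolding pd_def by (simp add: DERIV_imp_deriv axis_def)
qed

lemma pd_cong_open:
  assumes "open U" "x \<in> U" and eq: "\<And>y. y \<in> U \<Longrightarrow> f y = g y"
  shows "pd k f x = pd k g x"
proof -
  let ?l = "\<lambda>t::real. x + t *\<^sub>R axis k 1"
  have "open (?l -` U)"
    by (rule continuous_open_vimage[OF assms(1)]) (intro allI continuous_intros)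
  then have "\<forall>\<^sub>F t in nhds 0. ?l t \<in> U"
    using eventually_nhds_in_open[of "?l -` U" 0] assms(2) by simp
  then have "\<forall>\<^sub>F t in nhds 0. f (?l t) = g (?l t)"
    by eventually_elim (simp add: eq)
  then show ?thesis unfolding pd_def by (rule deriv_cong_ev) simp
qed

lemma smooth_on_imp_differentiable: "smooth_on U f \<Longrightarrow> open U \<Longrightarrow> x \<in> U \<Longrightarrow> f differentiable at x"
  unfolding smooth_on_def by (metis iter_pd.simps(1) differentiable_on_def at_within_open)

lemma smooth_on_const: "smooth_on U (\<lambda>y. c)"
proof -
  have "\<exists>c'. iter_pd ks (\<lambda>y. c) = (\<lambda>y. c')" for ks
    by (induction ks) (auto simp: pd_const)
  then show ?thesis
    unfolding smooth_on_def by (metis differentiable_const differentiable_on_def)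
qed

lemma smooth_on_coordinate: "smooth_on U (\<lambda>y. y$m)"
proof -
  have "\<exists>c'. iter_pd (k # ks) (\<lambda>y. y$m) = (\<lambda>y. c')" for k ks
  proof (induction ks arbitrary: k)
    case Nil
    show ?case by (auto simp: pd_coordinate[abs_def])
  next
    case (Cons a ks)
    then obtain c' where "iter_pd (a # ks) (\<lambda>y. y$m) = (\<lambda>y. c')" by blast
    then show ?case by (auto simp: pd_const)
  qed
  then have "iter_pd ks (\<lambda>y. y$m) differentiable_on U" for ks
    by (cases ks) (auto simp: bounded_linear_imp_differentiable_on bounded_linear_vec_nth,
        metis differentiable_const differentiable_on_def iter_pd.simps(2))
  then show ?thesis unfolding smooth_on_def ..
qed

definition pd_matrix :: "10 \<Rightarrow> (pt \<Rightarrow> real^'n^'n) \<Rightarrow> pt \<Rightarrow> real^'n^'n" where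
  "pd_matrix k F x = (\<chi> a b. pd k (\<lambda>y. F y $ a $ b) x)"

definition entrywise_differentiable :: "(pt \<Rightarrow> real^'n^'n) \<Rightarrow> pt \<Rightarrow> bool" where
  "entrywise_differentiable F x \<longleftrightarrow> (\<forall>a b. (\<lambda>y. F y $ a $ b) differentiable at x)"

lemma entrywise_differentiable_diff:
    "entrywise_differentiable F x \<Longrightarrow> entrywise_differentiable G x \<Longrightarrow> entrywise_differentiable (\<lambda>y. F y - G y) x"
  and entrywise_differentiable_scaleR:
    "f differentiable at x \<Longrightarrow> entrywise_differentiable F x \<Longrightarrow> entrywise_differentiable (\<lambda>y. f y *\<^sub>R F y) x"
  and entrywise_differentiable_mult:
    "entrywise_differentiable F x \<Longrightarrow> entrywise_differentiable G x \<Longrightarrow> entrywise_differentiable (\<lambda>y. F y ** G y) x"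
  unfolding entrywise_differentiable_def matrix_matrix_mult_def
  by (auto intro: differentiable_diff differentiable_mult intro!: differentiable_sum)

lemma entrywise_differentiable_sum:
  fixes I :: "'i::finite set"
  shows "(\<And>i. entrywise_differentiable (F i) x) \<Longrightarrow> entrywise_differentiable (\<lambda>y. \<Sum>i\<in>I. F i y) x"
  unfolding entrywise_differentiable_def by (auto simp: sum_component intro!: differentiable_sum)

lemma entrywise_differentiable_commutator:
  "entrywise_differentiable F x \<Longrightarrow> entrywise_differentiable G x \<Longrightarrow> entrywise_differentiable (\<lambda>y. commutator (F y) (G y)) x"
  unfolding commutator_def by (intro entrywise_differentiable_diff entrywise_differentiable_mult)

lemma pd_matrix_diff:
    "entrywise_differentiable F x \<Longrightarrow> entrywise_differentiable G x \<Longrightarrow> pd_matrix k (\<lambda>y. F y - G y) x = pd_matrix k F x - pd_matrix k G x"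
  and pd_matrix_scaleR:
    "f differentiable at x \<Longrightarrow> entrywise_differentiable F x \<Longrightarrow> pd_matrix k (\<lambda>y. f y *\<^sub>R F y) x = pd k f x *\<^sub>R F x + f x *\<^sub>R pd_matrix k F x"
  unfolding entrywise_differentiable_def pd_matrix_def by (simp_all add: vec_eq_iff pd_diff pd_mult)

lemma pd_matrix_sum:
  fixes I :: "'i::finite set"
  shows "(\<And>i. entrywise_differentiable (F i) x) \<Longrightarrow> pd_matrix k (\<lambda>y. \<Sum>i\<in>I. F i y) x = (\<Sum>i\<in>I. pd_matrix k (F i) x)"
  unfolding entrywise_differentiable_def pd_matrix_def by (simp add: vec_eq_iff sum_component pd_sum)

lemma pd_matrix_mult:
  assumes "entrywise_differentiable F x" "entrywise_differentiable G x"
  shows "pd_matrix k (\<lambda>y. F y ** G y) x = pd_matrix k F x ** G x + F x ** pd_matrix k G x"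
proof -
  have "pd k (\<lambda>y. \<Sum>c\<in>UNIV. F y $ a $ c * G y $ c $ b) x
      = (\<Sum>c\<in>UNIV. pd k (\<lambda>y. F y $ a $ c * G y $ c $ b) x)" for a b
    using assms unfolding entrywise_differentiable_def by (intro pd_sum differentiable_mult) auto
  also have "\<dots> a b = (\<Sum>c\<in>UNIV. pd k (\<lambda>y. F y $ a $ c) x * G x $ c $ b + F x $ a $ c * pd k (\<lambda>y. G y $ c $ b) x)" for a b
    using assms unfolding entrywise_differentiable_def by (intro sum.cong refl pd_mult) auto
  finally have "pd k (\<lambda>y. \<Sum>c\<in>UNIV. F y $ a $ c * G y $ c $ b) x
      = (\<Sum>c\<in>UNIV. pd k (\<lambda>y. F y $ a $ c) x * G x $ c $ b + F x $ a $ c * pd k (\<lambda>y. G y $ c $ b) x)" for a b .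
  then show ?thesis unfolding pd_matrix_def matrix_matrix_mult_def by (simp add: vec_eq_iff sum.distrib)
qed

lemma pd_matrix_commutator:
  "entrywise_differentiable F x \<Longrightarrow> entrywise_differentiable G x \<Longrightarrow>
    pd_matrix k (\<lambda>y. commutator (F y) (G y)) x = commutator (pd_matrix k F x) (G x) + commutator (F x) (pd_matrix k G x)"
  unfolding commutator_def
  by (simp add: pd_matrix_diff entrywise_differentiable_mult pd_matrix_mult algebra_simps)

lemma pd_matrix_cong_open:
  assumes "open U" "x \<in> U" and "\<And>y. y \<in> U \<Longrightarrow> F y = G y"
  shows "pd_matrix k F x = pd_matrix k G x"
proof -
  have "pd k (\<lambda>y. F y $ a $ b) x = pd k (\<lambda>y. G y $ a $ b) x" for a b
    using assms by (intro pd_cong_open[of U x]) simp_all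
  then show ?thesis unfolding pd_matrix_def by simp
qed

section \<open>Parallel matrix fields\<close>

text \<open>If \<open>T\<close> is parallel for a connection with coefficients \<open>g\<close> (on the index) and \<open>\<Gamma>\<close> (on the
  matrices), its first derivatives are \<open>E s i\<close> and its second derivatives are \<open>D s t i\<close>;
  antisymmetrising \<open>D\<close> produces the two curvatures.\<close>

lemma antisymmetrised_second_derivative:
  fixes T :: "'i::finite \<Rightarrow> real^'n^'n" and g :: "'i \<Rightarrow> 'i \<Rightarrow> 'i \<Rightarrow> real"
    and dg :: "'i \<Rightarrow> 'i \<Rightarrow> 'i \<Rightarrow> 'i \<Rightarrow> real" and \<Gamma> :: "'i \<Rightarrow> real^'n^'n" and d\<Gamma> :: "'i \<Rightarrow> 'i \<Rightarrow> real^'n^'n"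
  defines "E \<equiv> \<lambda>s i. (\<Sum>m\<in>UNIV. g m s i *\<^sub>R T m) - commutator (\<Gamma> s) (T i)"
  defines "D \<equiv> \<lambda>s t i. (\<Sum>m\<in>UNIV. dg s m t i *\<^sub>R T m + g m t i *\<^sub>R E s m)
      - (commutator (d\<Gamma> s t) (T i) + commutator (\<Gamma> t) (E s i))"
  shows "D s t i - D t s i
    = (\<Sum>l\<in>UNIV. (dg s l t i - dg t l s i + (\<Sum>m\<in>UNIV. g l s m * g m t i - g l t m * g m s i)) *\<^sub>R T l)
      - commutator (d\<Gamma> s t - d\<Gamma> t s + commutator (\<Gamma> s) (\<Gamma> t)) (T i)"
proof -
  have E_sum: "(\<Sum>m\<in>UNIV. g m t i *\<^sub>R E s m)
      = (\<Sum>n\<in>UNIV. (\<Sum>m\<in>UNIV. g n s m * g m t i) *\<^sub>R T n) - commutator (\<Gamma> s) (\<Sum>m\<in>UNIV. g m t i *\<^sub>R T m)"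
    for s t
  proof -
    have "(\<Sum>m\<in>UNIV. g m t i *\<^sub>R E s m)
        = (\<Sum>m\<in>UNIV. \<Sum>n\<in>UNIV. (g n s m * g m t i) *\<^sub>R T n) - (\<Sum>m\<in>UNIV. g m t i *\<^sub>R commutator (\<Gamma> s) (T m))"
      unfolding E_def by (simp add: scaleR_diff_right scaleR_sum_right sum_subtractf mult.commute)
    also have "(\<Sum>m\<in>UNIV. \<Sum>n\<in>UNIV. (g n s m * g m t i) *\<^sub>R T n) = (\<Sum>n\<in>UNIV. (\<Sum>m\<in>UNIV. g n s m * g m t i) *\<^sub>R T n)"
      by (subst sum.swap) (simp add: scaleR_sum_left)
    finally show ?thesis by (simp add: commutator_sum_right commutator_scaleR_right)
  qed
  have "D s t i - D t s i =
      ((\<Sum>l\<in>UNIV. dg s l t i *\<^sub>R T l) - (\<Sum>l\<in>UNIV. dg t l s i *\<^sub>R T l))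
    + ((\<Sum>n\<in>UNIV. (\<Sum>m\<in>UNIV. g n s m * g m t i) *\<^sub>R T n) - (\<Sum>n\<in>UNIV. (\<Sum>m\<in>UNIV. g n t m * g m s i) *\<^sub>R T n))
    - commutator (d\<Gamma> s t - d\<Gamma> t s) (T i)
    + (commutator (\<Gamma> t) (commutator (\<Gamma> s) (T i)) - commutator (\<Gamma> s) (commutator (\<Gamma> t) (T i)))"
    unfolding D_def sum.distrib E_sum by (simp add: E_def commutator_diff_left commutator_diff_right algebra_simps)
  also have "\<dots> = (\<Sum>l\<in>UNIV. (dg s l t i - dg t l s i + (\<Sum>m\<in>UNIV. g l s m * g m t i - g l t m * g m s i)) *\<^sub>R T l)
      - commutator (d\<Gamma> s t - d\<Gamma> t s + commutator (\<Gamma> s) (\<Gamma> t)) (T i)"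
    using commutator_derivation[of "\<Gamma> s" "\<Gamma> t" "T i"]
    by (simp add: commutator_add_left commutator_diff_left algebra_simps sum.distrib sum_subtractf scaleR_diff_left scaleR_add_left)
  finally show ?thesis .
qed

lemma derivative_structure_relation:
  fixes T :: "'i::finite \<Rightarrow> real^'n^'n" and c g :: "'i \<Rightarrow> 'i \<Rightarrow> 'i \<Rightarrow> real"
    and \<Gamma> :: "'i \<Rightarrow> real^'n^'n" and dc :: "'i \<Rightarrow> real"
  assumes relation: "\<And>i j. commutator (T i) (T j) = (\<Sum>k\<in>UNIV. c k i j *\<^sub>R T k)"
  defines "E \<equiv> \<lambda>m i. (\<Sum>n\<in>UNIV. g n m i *\<^sub>R T n) - commutator (\<Gamma> m) (T i)"
  shows "commutator (E m i) (T j) + commutator (T i) (E m j) - (\<Sum>k\<in>UNIV. dc k *\<^sub>R T k + c k i j *\<^sub>R E m k)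
    = (\<Sum>k\<in>UNIV. ((\<Sum>n\<in>UNIV. g n m i * c k n j) + (\<Sum>n\<in>UNIV. g n m j * c k i n)
        - (\<Sum>n\<in>UNIV. c n i j * g k m n) - dc k) *\<^sub>R T k)"
proof -
  have left: "commutator (E m i) (T j)
      = (\<Sum>k\<in>UNIV. (\<Sum>n\<in>UNIV. g n m i * c k n j) *\<^sub>R T k) - commutator (commutator (\<Gamma> m) (T i)) (T j)"
    unfolding E_def commutator_diff_left commutator_sum_left commutator_scaleR_left relation
    by (simp add: scaleR_sum_right scaleR_sum_left) (rule sum.swap)
  have right: "commutator (T i) (E m j)
      = (\<Sum>k\<in>UNIV. (\<Sum>n\<in>UNIV. g n m j * c k i n) *\<^sub>R T k) - commutator (T i) (commutator (\<Gamma> m) (T j))"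
    unfolding E_def commutator_diff_right commutator_sum_right commutator_scaleR_right relation
    by (simp add: scaleR_sum_right scaleR_sum_left) (rule sum.swap)
  have "(\<Sum>k\<in>UNIV. c k i j *\<^sub>R E m k)
      = (\<Sum>k\<in>UNIV. \<Sum>n\<in>UNIV. (c k i j * g n m k) *\<^sub>R T n) - commutator (\<Gamma> m) (commutator (T i) (T j))"
    unfolding E_def relation
    by (simp add: scaleR_diff_right scaleR_sum_right sum_subtractf commutator_sum_right commutator_scaleR_right)
  also have "(\<Sum>k\<in>UNIV. \<Sum>n\<in>UNIV. (c k i j * g n m k) *\<^sub>R T n) = (\<Sum>k\<in>UNIV. (\<Sum>n\<in>UNIV. c n i j * g k m n) *\<^sub>R T k)"
    by (subst sum.swap) (simp add: scaleR_sum_left)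
  finally have middle: "(\<Sum>k\<in>UNIV. c k i j *\<^sub>R E m k)
      = (\<Sum>k\<in>UNIV. (\<Sum>n\<in>UNIV. c n i j * g k m n) *\<^sub>R T k) - commutator (\<Gamma> m) (commutator (T i) (T j))" .
  show ?thesis
    unfolding sum.distrib left right middle using commutator_derivation[of "\<Gamma> m" "T i" "T j"]
    by (simp add: algebra_simps sum.distrib sum_subtractf scaleR_diff_left scaleR_add_left)
qed

section \<open>Algebraic curvature tensors\<close>

lemma sum_swap_pairs:
  "(\<Sum>a\<in>A. \<Sum>b\<in>B. \<Sum>c\<in>C. \<Sum>d\<in>D. f a b c d) = (\<Sum>c\<in>C. \<Sum>d\<in>D. \<Sum>a\<in>A. \<Sum>b\<in>B. f a b c d)"
proof -
  have "(\<Sum>a\<in>A. \<Sum>b\<in>B. \<Sum>c\<in>C. \<Sum>d\<in>D. f a b c d) = (\<Sum>a\<in>A. \<Sum>c\<in>C. \<Sum>b\<in>B. \<Sum>d\<in>D. f a b c d)"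
    by (rule sum.cong[OF refl], rule sum.swap)
  also have "\<dots> = (\<Sum>a\<in>A. \<Sum>c\<in>C. \<Sum>d\<in>D. \<Sum>b\<in>B. f a b c d)"
    by (rule sum.cong[OF refl], rule sum.cong[OF refl], rule sum.swap)
  also have "\<dots> = (\<Sum>c\<in>C. \<Sum>a\<in>A. \<Sum>d\<in>D. \<Sum>b\<in>B. f a b c d)"
    by (rule sum.swap)
  also have "\<dots> = (\<Sum>c\<in>C. \<Sum>d\<in>D. \<Sum>a\<in>A. \<Sum>b\<in>B. f a b c d)"
    by (rule sum.cong[OF refl], rule sum.swap)
  finally show ?thesis .
qed

locale algebraic_curvature_tensor =
  fixes g G :: "'i::finite \<Rightarrow> 'i \<Rightarrow> real" and R :: "'i \<Rightarrow> 'i \<Rightarrow> 'i \<Rightarrow> 'i \<Rightarrow> real"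
  assumes G_mult_g: "\<And>a c. (\<Sum>b\<in>UNIV. G a b * g b c) = (if a = c then 1 else 0)"
    and G_commute: "\<And>a b. G a b = G b a"
    and g_commute: "\<And>a b. g a b = g b a"
    and R_antisym: "\<And>l s t i. R l t s i = - R l s t i"
    and R_metric_skew: "\<And>s t i w. (\<Sum>l\<in>UNIV. R l s t i * g l w) + (\<Sum>l\<in>UNIV. R l s t w * g l i) = 0"
    and R_bianchi: "\<And>l i j k. R l i j k + R l j k i + R l k i j = 0"
begin

definition lowered :: "'i \<Rightarrow> 'i \<Rightarrow> 'i \<Rightarrow> 'i \<Rightarrow> real" where
  "lowered b s t i = (\<Sum>a\<in>UNIV. g b a * R a s t i)"

definition ricci :: "'i \<Rightarrow> 'i \<Rightarrow> real" where
  "ricci t b = (\<Sum>s\<in>UNIV. R s s t b)"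

lemma raise_lowered: "R a s t i = (\<Sum>b\<in>UNIV. G a b * lowered b s t i)"
proof -
  have "(\<Sum>b\<in>UNIV. G a b * lowered b s t i) = (\<Sum>c\<in>UNIV. (\<Sum>b\<in>UNIV. G a b * g b c) * R c s t i)"
    by (simp add: lowered_def sum_distrib_left sum_distrib_right mult.assoc) (rule sum.swap)
  also have "\<dots> = R a s t i"
    by (simp add: G_mult_g if_distrib if_distribR sum.delta cong: if_cong)
  finally show ?thesis by simp
qed

lemma lowered_antisym: "lowered b s t i = - lowered i s t b"
  using R_metric_skew[of s t i b] by (simp add: lowered_def g_commute mult.commute eq_neg_iff_add_eq_0)

lemma trace_last_eq_0: "(\<Sum>s\<in>UNIV. R s t b s) = 0"
proof -
  define X where "X = (\<Sum>s\<in>UNIV. \<Sum>c\<in>UNIV. G s c * lowered c t b s)"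
  have "X = - (\<Sum>s\<in>UNIV. \<Sum>c\<in>UNIV. G s c * lowered s t b c)"
    unfolding X_def by (subst lowered_antisym) (simp add: sum_negf)
  also have "(\<Sum>s\<in>UNIV. \<Sum>c\<in>UNIV. G s c * lowered s t b c) = X"
    unfolding X_def by (subst sum.swap) (simp add: G_commute)
  finally have "X = 0" by simp
  then show ?thesis by (simp add: X_def raise_lowered)
qed

lemma ricci_commute: "ricci t b = ricci b t"
proof -
  have "(\<Sum>s\<in>UNIV. R s s t b + R s t b s + R s b s t) = 0"
    by (simp add: R_bianchi)
  then have "ricci t b + (\<Sum>s\<in>UNIV. R s t b s) + (\<Sum>s\<in>UNIV. R s b s t) = 0"
    by (simp only: ricci_def sum.distrib)
  then show ?thesis
    using trace_last_eq_0[of t b] by (simp add: ricci_def R_antisym[of _ b _ t] sum_negf)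
qed

lemma contraction_eq_ricci: "(\<Sum>i\<in>UNIV. \<Sum>s\<in>UNIV. G i s * R a s t i) = - (\<Sum>b\<in>UNIV. G a b * ricci t b)"
proof -
  have "(\<Sum>i\<in>UNIV. \<Sum>s\<in>UNIV. G i s * R a s t i) = (\<Sum>i\<in>UNIV. \<Sum>s\<in>UNIV. \<Sum>b\<in>UNIV. G a b * (G i s * lowered b s t i))"
    by (simp add: raise_lowered sum_distrib_left mult_ac)
  also have "\<dots> = (\<Sum>i\<in>UNIV. \<Sum>b\<in>UNIV. \<Sum>s\<in>UNIV. G a b * (G i s * lowered b s t i))"
    by (rule sum.cong[OF refl], rule sum.swap)
  also have "\<dots> = (\<Sum>b\<in>UNIV. G a b * (\<Sum>i\<in>UNIV. \<Sum>s\<in>UNIV. G i s * lowered b s t i))"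
    by (subst sum.swap) (simp add: sum_distrib_left)
  also have "\<dots> = - (\<Sum>b\<in>UNIV. G a b * (\<Sum>s\<in>UNIV. \<Sum>i\<in>UNIV. G s i * lowered i s t b))"
  proof -
    have "(\<Sum>i\<in>UNIV. \<Sum>s\<in>UNIV. G i s * lowered b s t i) = - (\<Sum>s\<in>UNIV. \<Sum>i\<in>UNIV. G s i * lowered i s t b)" for b
      by (subst sum.swap) (simp add: lowered_antisym[of b] G_commute sum_negf)
    then show ?thesis by (simp add: sum_negf)
  qed
  also have "\<dots> = - (\<Sum>b\<in>UNIV. G a b * ricci t b)"
    by (simp add: ricci_def raise_lowered)
  finally show ?thesis .
qed

lemma ricci_contraction_antisym_eq_0:
  assumes F_antisym: "\<And>i j. F j i = - F i j"
  shows "(\<Sum>j\<in>UNIV. \<Sum>t\<in>UNIV. \<Sum>a\<in>UNIV. \<Sum>b\<in>UNIV. G j t * F a j * G a b * ricci t b) = 0"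
    (is "?W = 0")
proof -
  have "?W = (\<Sum>a\<in>UNIV. \<Sum>b\<in>UNIV. \<Sum>j\<in>UNIV. \<Sum>t\<in>UNIV. G j t * F a j * G a b * ricci t b)"
    by (rule sum_swap_pairs)
  also have "\<dots> = (\<Sum>a\<in>UNIV. \<Sum>b\<in>UNIV. \<Sum>j\<in>UNIV. \<Sum>t\<in>UNIV. - (G a b * F j a * G j t * ricci b t))"
  proof -
    have "G j t * F a j * G a b * ricci t b = - (G a b * F j a * G j t * ricci b t)" for a b j t
      using F_antisym[of a j] ricci_commute[of b t] by simp
    then show ?thesis by (intro sum.cong refl) assumption
  qed
  also have "\<dots> = - ?W"
    by (simp add: sum_negf)
  finally show ?thesis by simp
qed

lemma contraction_antisym_eq_0:
  assumes F_antisym: "\<And>i j. F j i = - F i j"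
  shows "(\<Sum>i\<in>UNIV. \<Sum>j\<in>UNIV. \<Sum>s\<in>UNIV. \<Sum>t\<in>UNIV. G i s * G j t * (\<Sum>a\<in>UNIV. R a s t i * F a j)) = 0"
    (is "?T = 0")
proof -
  have "?T = (\<Sum>j\<in>UNIV. \<Sum>i\<in>UNIV. \<Sum>s\<in>UNIV. \<Sum>t\<in>UNIV. \<Sum>a\<in>UNIV. G j t * F a j * (G i s * R a s t i))"
    by (subst sum.swap) (simp add: sum_distrib_left mult_ac)
  also have "\<dots> = (\<Sum>j\<in>UNIV. \<Sum>t\<in>UNIV. \<Sum>a\<in>UNIV. \<Sum>i\<in>UNIV. \<Sum>s\<in>UNIV. G j t * F a j * (G i s * R a s t i))"
    by (rule sum.cong[OF refl], rule sum_swap_pairs)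
  also have "\<dots> = (\<Sum>j\<in>UNIV. \<Sum>t\<in>UNIV. \<Sum>a\<in>UNIV. G j t * F a j * (\<Sum>i\<in>UNIV. \<Sum>s\<in>UNIV. G i s * R a s t i))"
    by (simp add: sum_distrib_left)
  also have "\<dots> = - (\<Sum>j\<in>UNIV. \<Sum>t\<in>UNIV. \<Sum>a\<in>UNIV. \<Sum>b\<in>UNIV. G j t * F a j * G a b * ricci t b)"
    by (simp add: contraction_eq_ricci sum_distrib_left sum_negf mult_ac)
  also have "\<dots> = 0"
    using ricci_contraction_antisym_eq_0[OF F_antisym] by simp
  finally show ?thesis .
qed

text \<open>The second term is the first one with the index pairs \<open>(i, s)\<close> and \<open>(j, t)\<close> exchanged.\<close>

theorem double_contraction_action_eq_0:
  assumes F_antisym: "\<And>i j. F j i = - F i j"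
  shows "(\<Sum>i\<in>UNIV. \<Sum>j\<in>UNIV. \<Sum>s\<in>UNIV. \<Sum>t\<in>UNIV.
      G i s * G j t * (- (\<Sum>a\<in>UNIV. R a s t i * F a j) - (\<Sum>a\<in>UNIV. R a s t j * F i a))) = 0"
proof -
  have pointwise: "R a t s i * F j a = R a s t i * F a j" for a t s i j
    using F_antisym[of a j] R_antisym[of a s t i] by simp
  have "(\<Sum>i\<in>UNIV. \<Sum>j\<in>UNIV. \<Sum>s\<in>UNIV. \<Sum>t\<in>UNIV. G i s * G j t * (\<Sum>a\<in>UNIV. R a s t j * F i a))
      = (\<Sum>i\<in>UNIV. \<Sum>j\<in>UNIV. \<Sum>s\<in>UNIV. \<Sum>t\<in>UNIV. G j t * G i s * (\<Sum>a\<in>UNIV. R a t s i * F j a))"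
    by (subst sum.swap) (rule sum.cong[OF refl], rule sum.cong[OF refl], rule sum.swap)
  also have "\<dots> = (\<Sum>i\<in>UNIV. \<Sum>j\<in>UNIV. \<Sum>s\<in>UNIV. \<Sum>t\<in>UNIV. G i s * G j t * (\<Sum>a\<in>UNIV. R a s t i * F a j))"
    unfolding pointwise by (simp add: mult_ac)
  finally show ?thesis
    using contraction_antisym_eq_0[OF F_antisym] by (simp add: right_diff_distrib sum_subtractf sum_negf)
qed

end

section \<open>Frameworks\<close>

definition spin_connection :: "(pt \<Rightarrow> 4 \<Rightarrow> 10 \<Rightarrow> 4 \<Rightarrow> real) \<Rightarrow> 10 \<Rightarrow> pt \<Rightarrow> real^4^4" where
  "spin_connection Gs k y = (\<chi> a b. Gs y a k b)"

definition spin_curvature :: "(pt \<Rightarrow> 4 \<Rightarrow> 10 \<Rightarrow> 10 \<Rightarrow> 4 \<Rightarrow> real) \<Rightarrow> pt \<Rightarrow> 10 \<Rightarrow> 10 \<Rightarrow> real^4^4" where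
  "spin_curvature Rs x s t = (\<chi> a b. Rs x a s t b)"

locale framework_on =
  fixes U Tv Ts Gv Gs Rv Rs
  assumes framework: "framework U Tv Ts Gv Gs Rv Rs"
begin

lemma open_U: "open U"
  and smooth_Tv: "smooth_on U (\<lambda>x. Tv x k i j)"
  and smooth_Ts: "smooth_on U (\<lambda>x. Ts x i a b)"
  and smooth_Gv: "smooth_on U (\<lambda>x. Gv x l k j)"
  and smooth_Gs: "smooth_on U (\<lambda>x. Gs x a k b)"
  using framework by (simp_all add: framework_def)

lemma framework_point_at: "x \<in> U \<Longrightarrow> framework_point Tv Ts x"
  using framework by (simp add: framework_def framework_point_def)

lemma commutator_fun:
  "smooth_on U f \<Longrightarrow> x \<in> U \<Longrightarrow>
    nabla_nabla_fun Gv f i j x - nabla_nabla_fun Gv f j i x = (\<Sum>k\<in>UNIV. Tv x k i j * pd k f x)"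
  and commutator_vec:
  "(\<And>l. smooth_on U (\<lambda>y. v y l)) \<Longrightarrow> x \<in> U \<Longrightarrow>
    nabla_nabla_vec Gv v i j l x - nabla_nabla_vec Gv v j i l x
      = (\<Sum>k\<in>UNIV. Tv x k i j * nabla_vec Gv v k l x) + (\<Sum>k\<in>UNIV. Rv x l i j k * v x k)"
  and commutator_spin:
  "(\<And>a. smooth_on U (\<lambda>y. \<psi> y a)) \<Longrightarrow> x \<in> U \<Longrightarrow>
    nabla_nabla_spin Gv Gs \<psi> i j a x - nabla_nabla_spin Gv Gs \<psi> j i a x
      = (\<Sum>k\<in>UNIV. Tv x k i j * nabla_spin Gs \<psi> k a x) + (\<Sum>b\<in>UNIV. Rs x a i j b * \<psi> x b)"
  and nabla_Ts_eq_0: "x \<in> U \<Longrightarrow> nabla_Ts Gv Gs Ts k i a b x = 0"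
  using framework by (simp_all add: framework_def)

text \<open>Applied to the coordinate functions, the commutator on functions identifies the torsion.\<close>

lemma torsion_eq:
  assumes "x \<in> U"
  shows "Tv x m i j = Gv x m j i - Gv x m i j"
  using commutator_fun[OF smooth_on_coordinate[of U m] assms, of i j]
  by (simp add: nabla_nabla_fun_def pd_coordinate[abs_def] pd_const if_distrib if_distribR sum.delta
      sum.delta' cong: if_cong)

lemma pd_commute:
  assumes "smooth_on U f" "x \<in> U"
  shows "pd i (pd j f) x = pd j (pd i f) x"
proof -
  have "(\<Sum>k\<in>UNIV. Tv x k i j * pd k f x) = (\<Sum>k\<in>UNIV. (Gv x k j i - Gv x k i j) * pd k f x)"
    using torsion_eq[OF assms(2)] by simp
  then show ?thesis
    using commutator_fun[OF assms, of i j] by (simp add: nabla_nabla_fun_def algebra_simps sum_subtractf)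
qed

text \<open>The curvature components are read off from the commutators on constant fields.\<close>

lemma curvature_vec_eq:
  assumes "x \<in> U"
  shows "Rv x l i j k = pd i (\<lambda>y. Gv y l j k) x - pd j (\<lambda>y. Gv y l i k) x
     + (\<Sum>m\<in>UNIV. Gv x l i m * Gv x m j k) - (\<Sum>m\<in>UNIV. Gv x l j m * Gv x m i k)"
proof -
  define v :: "pt \<Rightarrow> 10 \<Rightarrow> real" where "v = (\<lambda>y l. if l = k then 1 else 0)"
  have "smooth_on U (\<lambda>y. v y l)" for l
    by (simp add: v_def smooth_on_const)
  moreover have "nabla_vec Gv v j l = (\<lambda>y. Gv y l j k)" for j l
    by (simp add: fun_eq_iff nabla_vec_def v_def pd_const if_distrib if_distribR sum.delta' cong: if_cong)
  ultimately show ?thesis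
    using commutator_vec[of v, OF _ assms, of i j l]
    by (simp add: nabla_nabla_vec_def v_def torsion_eq[OF assms] if_distrib if_distribR sum.delta'
        algebra_simps sum_subtractf sum.distrib cong: if_cong)
qed

lemma curvature_spin_eq:
  assumes "x \<in> U"
  shows "Rs x a i j b = pd i (\<lambda>y. Gs y a j b) x - pd j (\<lambda>y. Gs y a i b) x
     + (\<Sum>c\<in>UNIV. Gs x a i c * Gs x c j b) - (\<Sum>c\<in>UNIV. Gs x a j c * Gs x c i b)"
proof -
  define \<psi> :: "pt \<Rightarrow> 4 \<Rightarrow> real" where "\<psi> = (\<lambda>y a. if a = b then 1 else 0)"
  have "smooth_on U (\<lambda>y. \<psi> y a)" for a
    by (simp add: \<psi>_def smooth_on_const)
  moreover have "nabla_spin Gs \<psi> j a = (\<lambda>y. Gs y a j b)" for j a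
    by (simp add: fun_eq_iff nabla_spin_def \<psi>_def pd_const if_distrib if_distribR sum.delta' cong: if_cong)
  ultimately show ?thesis
    using commutator_spin[of \<psi>, OF _ assms, of i j a]
    by (simp add: nabla_nabla_spin_def \<psi>_def torsion_eq[OF assms] if_distrib if_distribR sum.delta'
        algebra_simps sum_subtractf sum.distrib cong: if_cong)
qed

lemma curvature_vec_antisym: "x \<in> U \<Longrightarrow> Rv x l t s i = - Rv x l s t i"
  by (simp add: curvature_vec_eq)

lemma field_tensor_antisym:
  assumes "x \<in> U"
  shows "field_tensor Rs x j i = - field_tensor Rs x i j"
proof -
  have "Rs x a j i a = - Rs x a i j a" for a
    using assms by (simp add: curvature_spin_eq)
  then show ?thesis by (simp add: field_tensor_def sum_negf)
qed

lemma entrywise_differentiable_gen_matrix: "x \<in> U \<Longrightarrow> entrywise_differentiable (\<lambda>y. gen_matrix Ts y i) x"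
  and entrywise_differentiable_spin_connection: "x \<in> U \<Longrightarrow> entrywise_differentiable (spin_connection Gs k) x"
  and differentiable_Gv: "x \<in> U \<Longrightarrow> (\<lambda>y. Gv y m k i) differentiable at x"
  and differentiable_Tv: "x \<in> U \<Longrightarrow> (\<lambda>y. Tv y m k i) differentiable at x"
  using smooth_on_imp_differentiable[OF _ open_U] smooth_Ts smooth_Gs smooth_Gv smooth_Tv
  by (simp_all add: entrywise_differentiable_def gen_matrix_def to_matrix_def spin_connection_def)

lemma pd_gen_matrix:
  assumes "x \<in> U"
  shows "pd_matrix k (\<lambda>y. gen_matrix Ts y i) x
    = (\<Sum>m\<in>UNIV. Gv x m k i *\<^sub>R gen_matrix Ts x m) - commutator (spin_connection Gs k x) (gen_matrix Ts x i)"
  using nabla_Ts_eq_0[OF assms, of k i]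
  by (simp add: nabla_Ts_def pd_matrix_def gen_matrix_def to_matrix_def vec_eq_iff commutator_def
      matrix_matrix_mult_def spin_connection_def sum_component algebra_simps)

lemma spin_curvature_eq:
  assumes "x \<in> U"
  shows "spin_curvature Rs x s t = pd_matrix s (spin_connection Gs t) x - pd_matrix t (spin_connection Gs s) x
    + commutator (spin_connection Gs s x) (spin_connection Gs t x)"
  by (simp add: spin_curvature_def curvature_spin_eq[OF assms] vec_eq_iff pd_matrix_def
      spin_connection_def commutator_def matrix_matrix_mult_def)

lemma curvature_vec_gen_matrix:
  assumes "x \<in> U"
  shows "(\<Sum>l\<in>UNIV. Rv x l s t i *\<^sub>R gen_matrix Ts x l) = commutator (spin_curvature Rs x s t) (gen_matrix Ts x i)"
proof -
  define T where "T = gen_matrix Ts x"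
  define g where "g = Gv x"
  define dg where "dg = (\<lambda>s m t i. pd s (\<lambda>y. Gv y m t i) x)"
  define \<Gamma> where "\<Gamma> = (\<lambda>k. spin_connection Gs k x)"
  define d\<Gamma> where "d\<Gamma> = (\<lambda>s t. pd_matrix s (spin_connection Gs t) x)"
  define E where "E = (\<lambda>s i. (\<Sum>m\<in>UNIV. g m s i *\<^sub>R T m) - commutator (\<Gamma> s) (T i))"
  define D where "D = (\<lambda>s t i. (\<Sum>m\<in>UNIV. dg s m t i *\<^sub>R T m + g m t i *\<^sub>R E s m)
      - (commutator (d\<Gamma> s t) (T i) + commutator (\<Gamma> t) (E s i)))"
  have first: "pd_matrix s (\<lambda>y. gen_matrix Ts y i) x = E s i" for s i
    unfolding E_def T_def g_def \<Gamma>_def by (rule pd_gen_matrix[OF assms])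
  have second: "pd_matrix s (\<lambda>y. pd_matrix t (\<lambda>y. gen_matrix Ts y i) y) x = D s t i" for s t i
  proof -
    have "pd_matrix s (\<lambda>y. pd_matrix t (\<lambda>y. gen_matrix Ts y i) y) x
        = pd_matrix s (\<lambda>y. (\<Sum>m\<in>UNIV. Gv y m t i *\<^sub>R gen_matrix Ts y m)
            - commutator (spin_connection Gs t y) (gen_matrix Ts y i)) x"
      by (rule pd_matrix_cong_open[OF open_U assms]) (rule pd_gen_matrix)
    also have "\<dots> = D s t i"
      by (simp add: pd_matrix_diff pd_matrix_sum pd_matrix_scaleR pd_matrix_commutator
          entrywise_differentiable_sum entrywise_differentiable_scaleR entrywise_differentiable_commutator
          entrywise_differentiable_gen_matrix[OF assms] entrywise_differentiable_spin_connection[OF assms]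
          differentiable_Gv[OF assms] first)
        (simp add: D_def T_def g_def dg_def \<Gamma>_def d\<Gamma>_def)
    finally show ?thesis .
  qed
  have "D s t i = D t s i"
    using pd_commute[OF smooth_Ts assms] by (simp add: pd_matrix_def gen_matrix_def to_matrix_def flip: second)
  moreover have "D s t i - D t s i
    = (\<Sum>l\<in>UNIV. (dg s l t i - dg t l s i + (\<Sum>m\<in>UNIV. g l s m * g m t i - g l t m * g m s i)) *\<^sub>R T l)
      - commutator (d\<Gamma> s t - d\<Gamma> t s + commutator (\<Gamma> s) (\<Gamma> t)) (T i)"
    unfolding D_def E_def by (rule antisymmetrised_second_derivative)
  moreover have "dg s l t i - dg t l s i + (\<Sum>m\<in>UNIV. g l s m * g m t i - g l t m * g m s i) = Rv x l s t i" for l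
    by (simp add: curvature_vec_eq[OF assms] dg_def g_def sum_subtractf)
  moreover have "d\<Gamma> s t - d\<Gamma> t s + commutator (\<Gamma> s) (\<Gamma> t) = spin_curvature Rs x s t"
    by (simp add: spin_curvature_eq[OF assms] d\<Gamma>_def \<Gamma>_def)
  ultimately show ?thesis by (simp add: T_def)
qed

lemma curvature_vec_metric_skew:
  assumes "x \<in> U"
  shows "(\<Sum>l\<in>UNIV. Rv x l s t i * metric Ts x l w) + (\<Sum>l\<in>UNIV. Rv x l s t w * metric Ts x l i) = 0"
proof -
  have "(\<Sum>l\<in>UNIV. Rv x l s t i * metric Ts x l w)
      = trace (commutator (spin_curvature Rs x s t) (gen_matrix Ts x i) ** gen_matrix Ts x w)" for i w
    by (simp add: metric_eq_trace trace_sum trace_scaleR matrix_sum_rdistrib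
        flip: curvature_vec_gen_matrix[OF assms] scalar_matrix_assoc)
  then show ?thesis using trace_commutator_skew by simp
qed

lemma structure_constants_parallel:
  assumes "x \<in> U"
  shows "pd m (\<lambda>y. Tv y k i j) x = (\<Sum>n\<in>UNIV. Gv x n m i * Tv x k n j) + (\<Sum>n\<in>UNIV. Gv x n m j * Tv x k i n)
    - (\<Sum>n\<in>UNIV. Tv x n i j * Gv x k m n)"
proof -
  interpret framework_point Tv Ts x by (rule framework_point_at[OF assms])
  let ?T = "gen_matrix Ts x" and ?E = "\<lambda>i. pd_matrix m (\<lambda>y. gen_matrix Ts y i) x"
  have "pd_matrix m (\<lambda>y. commutator (gen_matrix Ts y i) (gen_matrix Ts y j)) x
      = pd_matrix m (\<lambda>y. \<Sum>k\<in>UNIV. Tv y k i j *\<^sub>R gen_matrix Ts y k) x"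
    using framework_point.commutator_gen_matrix[OF framework_point_at]
    by (intro pd_matrix_cong_open[OF open_U assms]) simp
  then have "commutator (?E i) (?T j) + commutator (?T i) (?E j)
      - (\<Sum>k\<in>UNIV. pd m (\<lambda>y. Tv y k i j) x *\<^sub>R ?T k + Tv x k i j *\<^sub>R ?E k) = 0"
    by (simp add: pd_matrix_commutator pd_matrix_sum pd_matrix_scaleR entrywise_differentiable_scaleR
        entrywise_differentiable_gen_matrix[OF assms] differentiable_Tv[OF assms])
  moreover note derivative_structure_relation[where T = ?T and c = "Tv x" and g = "Gv x"
      and \<Gamma> = "\<lambda>k. spin_connection Gs k x" and dc = "\<lambda>k. pd m (\<lambda>y. Tv y k i j) x",
      OF commutator_gen_matrix, of m i j]
  ultimately have "(\<Sum>k\<in>UNIV. ((\<Sum>n\<in>UNIV. Gv x n m i * Tv x k n j) + (\<Sum>n\<in>UNIV. Gv x n m j * Tv x k i n)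
      - (\<Sum>n\<in>UNIV. Tv x n i j * Gv x k m n) - pd m (\<lambda>y. Tv y k i j) x) *\<^sub>R ?T k) = 0"
    unfolding pd_gen_matrix[OF assms] by simp
  from gen_matrix_independent[OF this, of k] show ?thesis by simp
qed

lemma pd_torsion:
  assumes "x \<in> U"
  shows "pd m (\<lambda>y. Gv y l i j) x - pd m (\<lambda>y. Gv y l j i) x = - pd m (\<lambda>y. Tv y l i j) x"
proof -
  have "pd m (\<lambda>y. Gv y l i j - Gv y l j i) x = pd m (\<lambda>y. 0 - Tv y l i j) x"
    by (rule pd_cong_open[OF open_U assms]) (simp add: torsion_eq)
  moreover have "pd m (\<lambda>y. 0 - Tv y l i j) x = pd m (\<lambda>y. 0) x - pd m (\<lambda>y. Tv y l i j) x"
    by (rule pd_diff) (simp_all add: differentiable_Tv[OF assms])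
  ultimately show ?thesis
    by (simp add: pd_diff differentiable_Gv[OF assms] pd_const)
qed

theorem first_bianchi:
  assumes "x \<in> U"
  shows "Rv x l i j k + Rv x l j k i + Rv x l k i j = 0"
proof -
  interpret framework_point Tv Ts x by (rule framework_point_at[OF assms])
  let ?g = "Gv x" and ?c = "Tv x"
  let ?dc = "\<lambda>m l i j. pd m (\<lambda>y. Tv y l i j) x"
  have "Rv x l i j k + Rv x l j k i + Rv x l k i j
     = - (?dc i l j k + ?dc j l k i + ?dc k l i j)
       + (\<Sum>m\<in>UNIV. ?g l i m * ?g m j k - ?g l j m * ?g m i k + ?g l j m * ?g m k i - ?g l k m * ?g m j i
            + ?g l k m * ?g m i j - ?g l i m * ?g m k j)"
    unfolding curvature_vec_eq[OF assms]
    using pd_torsion[OF assms, of i l j k] pd_torsion[OF assms, of j l k i] pd_torsion[OF assms, of k l i j]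
    by (simp add: sum.distrib sum_subtractf)
  also have "\<dots> = (\<Sum>n\<in>UNIV.
        (?g l i n * ?c n j k - ?g n i j * ?c l n k - ?g n i k * ?c l j n)
      + (?g l j n * ?c n k i - ?g n j k * ?c l n i - ?g n j i * ?c l k n)
      + (?g l k n * ?c n i j - ?g n k i * ?c l n j - ?g n k j * ?c l i n)
      + (?g l i n * ?g n j k - ?g l j n * ?g n i k + ?g l j n * ?g n k i - ?g l k n * ?g n j i
            + ?g l k n * ?g n i j - ?g l i n * ?g n k j))"
    unfolding structure_constants_parallel[OF assms]
    by (simp add: sum.distrib sum_subtractf sum_negf algebra_simps)
  also have "\<dots> = (\<Sum>n\<in>UNIV. ?c n i j * ?c l n k + ?c n j k * ?c l n i + ?c n k i * ?c l n j)"
    by (rule sum.cong[OF refl]) (simp add: torsion_eq[OF assms] algebra_simps)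
  also have "\<dots> = 0" by (rule structure_constants_jacobi)
  finally show ?thesis .
qed

end

theorem mainTheorem9:
  assumes "framework U Tv Ts Gv Gs Rv Rs"
    and "x \<in> U"
  shows "(\<Sum>i\<in>UNIV. \<Sum>j\<in>UNIV. \<Sum>s\<in>UNIV. \<Sum>t\<in>UNIV. inv_metric Ts x i s * inv_metric Ts x j t * curv_on_F Rv Rs x s t i j) = 0"
proof -
  interpret framework_on U Tv Ts Gv Gs Rv Rs by (rule framework_on.intro) (rule assms(1))
  interpret framework_point Tv Ts x by (rule framework_point_at[OF assms(2)])
  interpret algebraic_curvature_tensor "metric Ts x" "inv_metric Ts x" "Rv x"
    by unfold_locales
      (rule inv_metric_mult_metric inv_metric_commute metric_commute curvature_vec_antisym[OF assms(2)]
        curvature_vec_metric_skew[OF assms(2)] first_bianchi[OF assms(2)])+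
  show ?thesis
    unfolding curv_on_F_def by (rule double_contraction_action_eq_0) (rule field_tensor_antisym[OF assms(2)])
qed

end
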